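(* Let $c_k:S^1\to\widehat{\mathbb{C}}$ ($k\in\mathbb{N}$) and $c:S^1\to\widehat{\mathbb{C}}$ be simple closed curves such that $c_k(S^1)\to c(S^1)$ in the Fell topology on closed subsets of $\widehat{\mathbb{C}}$. If the sequence $\{c_k\}$ has no collapsing finger, then the curves $c_k$ can be reparametrized (i.e. replaced by $c_k\circ\sigma_k$ for homeomorphisms $\sigma_k:S^1\to S^1$) so that $c_k\to c$ uniformly.
   Context: The Fell topology on the space of closed subsets of a space $S$ is generated by the sets $N(K,\mathcal U)=\{A : A\cap K=\varnothing,\ A\cap U\neq\varnothing \ \forall U\in\mathcal U\}$ with $K\subset S$ compact and $\mathcal U$ a finite family of open sets; for $S=\widehat{\mathbb{C}}$, $A_n\to A$ iff every point of $A$ is a limit of points $a_n\in A_n$ and every accumulation point of any sequence $a_n\in A_n$ lies in $A$. A sequence $\{c_k\}$ of simple closed curves has a collapsing finger if, after passing to a subsequence, there are $x_k,y_k,z_k,w_k\in S^1$ in cyclic order and points $x\neq y$ in $\widehat{\mathbb{C}}$ with $c_k(x_k)\to x$, $c_k(y_k)\to y$, $c_k(z_k)\to x$, $c_k(w_k)\to y$. *)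

theory Defs
  imports "HOL-Analysis.Analysis"
begin

definition circle1 :: "complex set" where
  "circle1 = sphere 0 1"

text \<open>The Riemann sphere, modelled (via stereographic projection) as the unit
  sphere in R^3, with the chordal metric = restriction of the Euclidean metric.\<close>
definition riemann_sphere :: "(real^3) set" where
  "riemann_sphere = sphere 0 1"

definition simple_closed_curve :: "(complex \<Rightarrow> real^3) \<Rightarrow> bool" where
  "simple_closed_curve c \<longleftrightarrow>
     continuous_on circle1 c \<and> inj_on c circle1 \<and> c ` circle1 \<subseteq> riemann_sphere"

definition fell_basic :: "'a topology \<Rightarrow> 'a set \<Rightarrow> 'a set set \<Rightarrow> 'a set set" where
  "fell_basic X K \<U> = {A. closedin X A \<and> A \<inter> K = {} \<and> (\<forall>U\<in>\<U>. A \<inter> U \<noteq> {})}"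

definition fell_topology :: "'a topology \<Rightarrow> 'a set topology" where
  "fell_topology X = topology_generated_by
     {fell_basic X K \<U> | K \<U>. compactin X K \<and> finite \<U> \<and> (\<forall>U\<in>\<U>. openin X U)}"

definition cyclic_order4 :: "complex \<Rightarrow> complex \<Rightarrow> complex \<Rightarrow> complex \<Rightarrow> bool" where
  "cyclic_order4 a b c d \<longleftrightarrow>
     (\<exists>t0 t1 t2 t3. t0 < t1 \<and> t1 < t2 \<and> t2 < t3 \<and> t3 < t0 + 2 * pi \<and>
        a = cis t0 \<and> b = cis t1 \<and> c = cis t2 \<and> d = cis t3)"

definition has_collapsing_finger :: "(nat \<Rightarrow> complex \<Rightarrow> real^3) \<Rightarrow> bool" where
  "has_collapsing_finger c \<longleftrightarrow>
     (\<exists>r::nat\<Rightarrow>nat. strict_mono r \<and>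
       (\<exists>xs ys zs ws :: nat \<Rightarrow> complex. \<exists>x y :: real^3.
          x \<in> riemann_sphere \<and> y \<in> riemann_sphere \<and> x \<noteq> y \<and>
          (\<forall>k. xs k \<in> circle1 \<and> ys k \<in> circle1 \<and> zs k \<in> circle1 \<and> ws k \<in> circle1 \<and>
               cyclic_order4 (xs k) (ys k) (zs k) (ws k)) \<and>
          ((\<lambda>k. c (r k) (xs k)) \<longlonglongrightarrow> x) \<and>
          ((\<lambda>k. c (r k) (ys k)) \<longlonglongrightarrow> y) \<and>
          ((\<lambda>k. c (r k) (zs k)) \<longlonglongrightarrow> x) \<and>
          ((\<lambda>k. c (r k) (ws k)) \<longlonglongrightarrow> y)))"

end

theory Submission
  imports Defs
begin

text \<open>The curves cs k eventually lie in a thin neighbourhood of the limit curve J = c ` circle1,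
  on which there is a retraction \<phi> onto the circle inverting c; so g k = \<phi> \<circ> cs k is a circle
  map with c \<circ> g k uniformly close to cs k. Without collapsing fingers, two close points of cs k
  always bound an arc of cs k of small diameter, uniformly in k. For g k this rules out returning
  to a value after excursions on both sides, which forces its lift to have degree 1 or -1 and to
  backtrack by less than a small h. Such an almost monotone lift is uniformly close to a
  homeomorphism of the line commuting with translation by 1, whose inverse gives a
  reparametrisation \<sigma> k with g k \<circ> \<sigma> k close to the identity, hence cs k \<circ> \<sigma> k close to c.
  A diagonal argument over the accuracies turns this into a single sequence \<sigma> k.\<close>

definition cis2pi :: "real \<Rightarrow> complex" where
  "cis2pi t = cis (2 * pi * t)"

lemma cis2pi_in_circle1 [simp]: "cis2pi t \<in> circle1"
  by (simp add: cis2pi_def circle1_def)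

lemma norm_cis2pi [simp]: "norm (cis2pi t) = 1"
  by (simp add: cis2pi_def)

lemma cis2pi_nonzero [simp]: "cis2pi t \<noteq> 0"
  using norm_cis2pi[of t] by (metis norm_zero zero_neq_one)

lemma cis2pi_diff: "cis2pi (s - t) = cis2pi s / cis2pi t"
  by (simp add: cis2pi_def cis_divide right_diff_distrib)

lemma continuous_on_cis2pi [continuous_intros]: "continuous_on S cis2pi"
  unfolding cis2pi_def cis_conv_exp by (intro continuous_intros)

lemma cis2pi_eq_1_iff: "cis2pi t = 1 \<longleftrightarrow> t \<in> \<int>"
proof -
  have "cis2pi t = exp (complex_of_real (2 * pi * t) * \<i>)"
    by (simp add: cis2pi_def cis_conv_exp mult.commute)
  hence "cis2pi t = 1 \<longleftrightarrow> (\<exists>n::int. 2 * pi * t = of_int (2 * n) * pi)"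
    by (simp add: exp_eq_1)
  also have "\<dots> \<longleftrightarrow> (\<exists>n::int. t = of_int n)"
    by (auto simp: field_simps)
  finally show ?thesis by (auto elim: Ints_cases)
qed

lemma cis2pi_eq_iff: "cis2pi s = cis2pi t \<longleftrightarrow> s - t \<in> \<int>"
  by (auto simp: cis2pi_diff cis2pi_eq_1_iff[symmetric])

lemma cis2pi_add_int [simp]: "n \<in> \<int> \<Longrightarrow> cis2pi (t + n) = cis2pi t"
  by (simp add: cis2pi_eq_iff)

lemma cis2pi_add_1 [simp]: "cis2pi (t + 1) = cis2pi t"
  by (simp add: cis2pi_eq_iff)

lemma cis2pi_minus: "cis2pi (- t) = cnj (cis2pi t)"
  by (simp add: cis2pi_def cis_cnj)

lemma circle1_cis2pi_from:
  assumes "z \<in> circle1"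
  obtains t where "a \<le> t" "t < a + 1" "cis2pi t = z"
proof -
  have z: "norm z = 1" using assms by (simp add: circle1_def)
  hence "cis (Arg z) = z" using cis_Arg[of z] by (fastforce simp: sgn_div_norm)
  hence "cis2pi (Arg z / (2 * pi)) = z" by (simp add: cis2pi_def)
  define t where "t = Arg z / (2 * pi) + of_int \<lceil>a - Arg z / (2 * pi)\<rceil>"
  have "a \<le> t" "t < a + 1" unfolding t_def by linarith+
  moreover have "cis2pi t = z"
    using \<open>cis2pi (Arg z / (2 * pi)) = z\<close> by (simp add: t_def)
  ultimately show thesis by (rule that)
qed

lemma circle1_cis2pi:
  assumes "z \<in> circle1"
  obtains t where "cis2pi t = z"
  using circle1_cis2pi_from[OF assms] by metis

lemma cis2pi_image: "cis2pi ` {a..a+1} = circle1"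
proof
  show "circle1 \<subseteq> cis2pi ` {a..a+1}"
    by (metis atLeastAtMost_iff circle1_cis2pi_from image_eqI less_eq_real_def subsetI)
qed auto

lemma norm_cis_minus_1_le: "norm (cis x - 1) \<le> \<bar>x\<bar>"
proof -
  have "(norm (cis x - 1))\<^sup>2 = (cos x - 1)\<^sup>2 + (sin x)\<^sup>2"
    by (simp add: cmod_def)
  also have "\<dots> = 4 * (sin (x / 2))\<^sup>2"
    using cos_double_sin[of "x / 2"] by (simp add: power2_eq_square algebra_simps)
  also have "\<dots> \<le> 4 * (x / 2)\<^sup>2"
    using abs_sin_x_le_abs_x[of "x / 2"] abs_le_square_iff[of "sin (x / 2)" "x / 2"] by simp
  also have "\<dots> = x\<^sup>2" by (simp add: power2_eq_square)
  finally show ?thesis by (simp add: abs_le_square_iff[symmetric] real_le_rsqrt)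
qed

lemma norm_cis2pi_diff: "norm (cis2pi s - cis2pi t) = norm (cis2pi (s - t) - 1)"
proof -
  have "cis2pi s - cis2pi t = cis2pi t * (cis2pi (s - t) - 1)"
    by (simp add: cis2pi_diff right_diff_distrib)
  thus ?thesis by (simp add: norm_mult)
qed

lemma dist_cis2pi_le: "dist (cis2pi s) (cis2pi t) \<le> 2 * pi * \<bar>s - t\<bar>"
  using norm_cis_minus_1_le[of "2 * pi * (s - t)"]
  by (simp add: dist_norm norm_cis2pi_diff abs_mult) (simp add: cis2pi_def)

lemma IVT_real_between:
  fixes F :: "real \<Rightarrow> real"
  assumes "continuous_on {a..b} F" "a \<le> b" "min (F a) (F b) \<le> y" "y \<le> max (F a) (F b)"
  obtains x where "a \<le> x" "x \<le> b" "F x = y"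
proof (cases "F a \<le> F b")
  case True
  thus thesis using IVT'[of F a y b] assms that by (auto simp: min_def max_def)
next
  case False
  thus thesis using IVT2'[of F b y a] assms that by (auto simp: min_def max_def)
qed

lemma translate_of_int:
  fixes F :: "real \<Rightarrow> real"
  assumes "\<And>t. F (t + 1) = F t + d"
  shows "F (t + of_int n) = F t + of_int n * d"
proof -
  have nat: "F (s + real m) = F s + real m * d" for s m
  proof (induction m)
    case (Suc m)
    have "F (s + real (Suc m)) = F ((s + real m) + 1)" by (simp add: algebra_simps)
    thus ?case using Suc assms[of "s + real m"] by (simp add: algebra_simps)
  qed simp
  show ?thesis
  proof (cases "n \<ge> 0")
    case True
    thus ?thesis using nat[of t "nat n"] by simp
  next
    case False
    thus ?thesis using nat[of "t + of_int n" "nat (- n)"] by simp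
  qed
qed

lemma integer_increment_constant:
  fixes F :: "real \<Rightarrow> real"
  assumes cont: "continuous_on UNIV F" and ints: "\<And>t. F (t + 1) - F t \<in> \<int>"
  obtains d :: int where "\<And>t. F (t + 1) = F t + of_int d"
proof -
  define D where "D t = F (t + 1) - F t" for t
  have "continuous_on UNIV D" unfolding D_def
    by (intro continuous_intros continuous_on_compose2[OF cont]) auto
  moreover have "\<exists>e>0. \<forall>y. y \<in> UNIV \<and> D y \<noteq> D x \<longrightarrow> e \<le> norm (D y - D x)" for x
    using ints Ints_nonzero_abs_ge1[OF Ints_diff] by (auto simp: D_def intro!: exI[of _ 1])
  ultimately have "D constant_on UNIV"
    by (intro continuous_discrete_range_constant) auto
  hence "D t = D 0" for t by (auto simp: constant_on_def)
  moreover obtain d where "D 0 = of_int d" using ints[of 0] by (auto simp: D_def elim: Ints_cases)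
  ultimately show thesis using that by (simp add: D_def algebra_simps)
qed

lemma subseq_frequently:
  fixes P :: "nat \<Rightarrow> nat \<Rightarrow> bool"
  assumes "\<And>m. frequently (P m) sequentially"
  obtains r where "strict_mono r" "\<And>m. P m (r m)"
proof -
  obtain f where f: "\<And>m N. N \<le> f m N \<and> P m (f m N)"
    using assms unfolding frequently_sequentially by metis
  define r where "r = rec_nat (f 0 0) (\<lambda>m rm. f (Suc m) (Suc rm))"
  have "r m < r (Suc m)" for m using f[where m="Suc m" and N="Suc (r m)"] by (simp add: r_def Suc_le_eq)
  hence "strict_mono r" by (simp add: strict_mono_Suc_iff)
  moreover have "P m (r m)" for m using f by (cases m) (simp_all add: r_def)
  ultimately show thesis by (rule that)
qed

lemma tendsto_eventually_neq:
  fixes f g :: "'b \<Rightarrow> 'a::metric_space"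
  assumes "(f \<longlongrightarrow> x) F" "(g \<longlongrightarrow> y) F" "x \<noteq> y"
  shows "eventually (\<lambda>n. f n \<noteq> g n) F"
proof -
  have "((\<lambda>n. dist (f n) (g n)) \<longlongrightarrow> dist x y) F" using assms by (intro tendsto_intros)
  moreover have "dist x y > 0" using assms(3) by simp
  ultimately have "eventually (\<lambda>n. dist (f n) (g n) > 0) F"
    by (rule order_tendstoD(1))
  thus ?thesis by (rule eventually_mono) auto
qed

lemma tendsto_dist_transform:
  fixes f g :: "'b \<Rightarrow> 'a::metric_space"
  assumes "(g \<longlongrightarrow> y) F" "((\<lambda>n. dist (f n) (g n)) \<longlongrightarrow> 0) F"
  shows "(f \<longlongrightarrow> y) F"
proof -
  have "((\<lambda>n. dist (g n) y) \<longlongrightarrow> 0) F" using assms(1) tendsto_dist_iff by blast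
  hence lim: "((\<lambda>n. dist (f n) (g n) + dist (g n) y) \<longlongrightarrow> 0) F"
    using assms(2) tendsto_add_zero by blast
  have le: "eventually (\<lambda>n. dist (f n) y \<le> dist (f n) (g n) + dist (g n) y) F"
    by (simp add: dist_triangle)
  have "((\<lambda>n. dist (f n) y) \<longlongrightarrow> 0) F"
    by (rule tendsto_sandwich[OF _ le tendsto_const lim]) simp
  thus ?thesis using tendsto_dist_iff by blast
qed

lemma eventually_diagonal:
  fixes P :: "nat \<Rightarrow> nat \<Rightarrow> bool"
  assumes ev: "\<And>m. eventually (P m) sequentially"
  obtains \<mu> where "filterlim \<mu> at_top sequentially" "eventually (\<lambda>k. P (\<mu> k) k) sequentially"
proof -
  define \<mu> where "\<mu> k = Max {m. m \<le> k \<and> P m k}" for k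
  have ge: "m \<le> \<mu> k" if "m \<le> k" "P m k" for m k
    unfolding \<mu>_def by (rule Max_ge) (use that in auto)
  have "filterlim \<mu> at_top sequentially"
    unfolding filterlim_at_top
  proof
    fix m
    show "eventually (\<lambda>k. m \<le> \<mu> k) sequentially"
      using ev[of m] eventually_ge_at_top[of m] by eventually_elim (rule ge)
  qed
  moreover have "eventually (\<lambda>k. P (\<mu> k) k) sequentially"
    using ev[of 0]
  proof eventually_elim
    case (elim k)
    hence "{m. m \<le> k \<and> P m k} \<noteq> {}" by auto
    thus ?case using Max_in[of "{m. m \<le> k \<and> P m k}"] by (simp add: \<mu>_def)
  qed
  ultimately show thesis by (rule that)
qed

lemma uniform_limit_of_reparametrizations:
  fixes f :: "nat \<Rightarrow> 'a::topological_space \<Rightarrow> 'b::metric_space"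
  assumes "\<And>e. e > 0 \<Longrightarrow> eventually (\<lambda>k. \<exists>\<sigma> \<tau>. homeomorphism S S \<sigma> \<tau> \<and>
             (\<forall>z\<in>S. dist (f k (\<sigma> z)) (g z) < e)) sequentially"
  shows "\<exists>\<sigma> \<tau>. (\<forall>k. homeomorphism S S (\<sigma> k) (\<tau> k)) \<and>
           uniform_limit S (\<lambda>k. f k \<circ> \<sigma> k) g sequentially"
proof -
  define P where "P m k \<longleftrightarrow> (\<exists>\<sigma> \<tau>. homeomorphism S S \<sigma> \<tau> \<and>
      (\<forall>z\<in>S. dist (f k (\<sigma> z)) (g z) < inverse (real (Suc m))))" for m k
  have "eventually (P m) sequentially" for m
    using assms[of "inverse (real (Suc m))"] unfolding P_def by simp
  then obtain \<mu> where \<mu>: "filterlim \<mu> at_top sequentially" "eventually (\<lambda>k. P (\<mu> k) k) sequentially"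
    using eventually_diagonal[of P] by blast
  have "\<exists>\<sigma> \<tau>. homeomorphism S S \<sigma> \<tau> \<and>
      (P (\<mu> k) k \<longrightarrow> (\<forall>z\<in>S. dist (f k (\<sigma> z)) (g z) < inverse (real (Suc (\<mu> k)))))" for k
  proof (cases "P (\<mu> k) k")
    case True thus ?thesis unfolding P_def by blast
  next
    case False thus ?thesis using homeomorphism_ident[of S] by blast
  qed
  then obtain \<sigma> \<tau> where \<sigma>\<tau>: "\<And>k. homeomorphism S S (\<sigma> k) (\<tau> k)"
    "\<And>k. P (\<mu> k) k \<Longrightarrow> \<forall>z\<in>S. dist (f k (\<sigma> k z)) (g z) < inverse (real (Suc (\<mu> k)))"
    by metis
  have "uniform_limit S (\<lambda>k. f k \<circ> \<sigma> k) g sequentially"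
    unfolding uniform_limit_iff
  proof (intro allI impI)
    fix e :: real assume "e > 0"
    then obtain m where m: "inverse (real (Suc m)) < e" using reals_Archimedean by blast
    have "eventually (\<lambda>k. m \<le> \<mu> k) sequentially" using \<mu>(1) by (simp add: filterlim_at_top)
    with \<mu>(2) show "eventually (\<lambda>k. \<forall>z\<in>S. dist ((f k \<circ> \<sigma> k) z) (g z) < e) sequentially"
    proof eventually_elim
      case (elim k)
      have "inverse (real (Suc (\<mu> k))) \<le> inverse (real (Suc m))"
        using elim(2) by (intro le_imp_inverse_le) auto
      hence "inverse (real (Suc (\<mu> k))) < e" using m by linarith
      thus ?case using \<sigma>\<tau>(2)[OF elim(1)] by force
    qed
  qed
  thus ?thesis using \<sigma>\<tau>(1) by blast
qed

lemma connected_infdist_le_both: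
  fixes Y P Q :: "'a::metric_space set"
  assumes "connected Y"
    and cover: "\<And>y. y \<in> Y \<Longrightarrow> infdist y P \<le> \<eta> \<or> infdist y Q \<le> \<eta>"
    and "y1 \<in> Y" "infdist y1 P \<le> \<eta>" "y2 \<in> Y" "infdist y2 Q \<le> \<eta>"
  obtains y where "y \<in> Y" "infdist y P \<le> \<eta>" "infdist y Q \<le> \<eta>"
proof -
  have closed: "closed {y. infdist y R \<le> \<eta>}" for R :: "'a set"
    by (rule closed_Collect_le) (auto intro: continuous_intros)
  have "{y. infdist y P \<le> \<eta>} \<inter> {y. infdist y Q \<le> \<eta>} \<inter> Y \<noteq> {}"
    using \<open>connected Y\<close>[unfolded connected_closed] closed[of P] closed[of Q] cover assms(3-6)
    by blast
  thus thesis using that by blast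
qed

lemma compact_infdist_le_subset_open:
  fixes K :: "'a::heine_borel set"
  assumes "compact K" "K \<noteq> {}" "open V" "K \<subseteq> V"
  obtains r where "r > 0" "{w. infdist w K \<le> r} \<subseteq> V"
proof -
  obtain e where e: "e > 0" "(\<Union>x\<in>K. ball x e) \<subseteq> V"
    using compact_subset_open_imp_ball_epsilon_subset[OF assms(1,3,4)] by blast
  have "w \<in> V" if "infdist w K \<le> e / 2" for w
  proof -
    obtain k where "k \<in> K" "infdist w K = dist w k"
      using infdist_attains_inf[OF compact_imp_closed[OF assms(1)] assms(2)] by blast
    thus ?thesis using that e by (force simp: dist_commute)
  qed
  thus thesis using that[of "e / 2"] e(1) by auto
qed

section \<open>Fell convergence in a compact metric space\<close>

lemma fell_basic_openin:
  assumes "compact K" "K \<subseteq> S" "finite \<U>" "\<And>U. U \<in> \<U> \<Longrightarrow> open U"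
  shows "openin (fell_topology (top_of_set S)) (fell_basic (top_of_set S) K ((\<lambda>U. S \<inter> U) ` \<U>))"
  unfolding fell_topology_def
proof (rule topology_generated_by_Basis, intro CollectI exI conjI)
  show "compactin (top_of_set S) K" using assms by (simp add: compactin_subtopology)
  show "\<forall>U\<in>(\<lambda>U. S \<inter> U) ` \<U>. openin (top_of_set S) U"
    using assms by (auto intro: openin_open_Int)
qed (use assms in auto)

lemma fell_limit_eventually:
  assumes lim: "limitin (fell_topology (top_of_set S)) A L F"
    and L: "closedin (top_of_set S) L"
    and K: "compact K" "K \<subseteq> S" "L \<inter> K = {}"
    and \<U>: "finite \<U>" "\<And>U. U \<in> \<U> \<Longrightarrow> open U \<and> L \<inter> U \<noteq> {}"
  shows "eventually (\<lambda>k. A k \<subseteq> S \<and> A k \<inter> K = {} \<and> (\<forall>U\<in>\<U>. A k \<inter> U \<noteq> {})) F"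
proof -
  let ?N = "fell_basic (top_of_set S) K ((\<lambda>U. S \<inter> U) ` \<U>)"
  have "L \<subseteq> S" using closedin_imp_subset[OF L] .
  hence "L \<in> ?N"
    using L K \<U> unfolding fell_basic_def by blast
  hence "eventually (\<lambda>k. A k \<in> ?N) F"
    using lim fell_basic_openin[OF K(1,2) \<U>(1)] \<U>(2) unfolding limitin_def by blast
  thus ?thesis
    by (rule eventually_mono) (auto simp: fell_basic_def dest: closedin_imp_subset)
qed

lemma fell_limit_eventually_avoids:
  fixes S :: "'a::metric_space set"
  assumes lim: "limitin (fell_topology (top_of_set S)) A L F"
    and L: "closedin (top_of_set S) L" and S: "compact S" and "x \<notin> L"
  shows "\<exists>e>0. eventually (\<lambda>k. A k \<inter> ball x e = {}) F"
proof -
  have "closed L" using L S closedin_closed_trans compact_imp_closed by blast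
  then obtain e where "e > 0" "ball x e \<subseteq> - L"
    using \<open>x \<notin> L\<close> open_contains_ball[of "- L"] by blast
  define K where "K = cball x (e / 2) \<inter> S"
  have "cball x (e / 2) \<subseteq> ball x e" using \<open>e > 0\<close> by auto
  hence "compact K" "K \<subseteq> S" "L \<inter> K = {}"
    using S \<open>ball x e \<subseteq> - L\<close> by (auto simp: K_def compact_Int_closed)
  hence "eventually (\<lambda>k. A k \<subseteq> S \<and> A k \<inter> K = {}) F"
    using fell_limit_eventually[OF lim L, of K "{}"] by simp
  hence "eventually (\<lambda>k. A k \<inter> ball x (e / 2) = {}) F"
    by (rule eventually_mono) (auto simp: K_def)
  thus ?thesis using \<open>e > 0\<close> half_gt_zero by blast
qed

lemma fell_limit_contains_limit_points:
  fixes S :: "'a::metric_space set"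
  assumes lim: "limitin (fell_topology (top_of_set S)) A L sequentially"
    and L: "closedin (top_of_set S) L" and S: "compact S"
    and r: "strict_mono r" and p: "\<And>n. p n \<in> A (r n)" and px: "p \<longlonglongrightarrow> x"
  shows "x \<in> L"
proof (rule ccontr)
  assume "x \<notin> L"
  then obtain e where "e > 0" and "eventually (\<lambda>k. A k \<inter> ball x e = {}) sequentially"
    using fell_limit_eventually_avoids[OF lim L S] by blast
  hence "eventually (\<lambda>n. A (r n) \<inter> ball x e = {}) sequentially"
    using eventually_compose_filterlim filterlim_subseq[OF r] by blast
  moreover have "eventually (\<lambda>n. dist (p n) x < e) sequentially"
    using px \<open>e > 0\<close> by (simp add: tendsto_iff)
  ultimately have "eventually (\<lambda>n. False) sequentially"
    by eventually_elim (metis IntI empty_iff mem_ball dist_commute p)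
  thus False by simp
qed

lemma fell_limit_eventually_dense:
  fixes S :: "'a::metric_space set"
  assumes lim: "limitin (fell_topology (top_of_set S)) A L F"
    and L: "closedin (top_of_set S) L" and S: "compact S" and "e > 0"
  shows "eventually (\<lambda>k. \<forall>y\<in>L. \<exists>a\<in>A k. dist a y < e) F"
proof -
  have "compact L" using L S closedin_compact by blast
  then obtain T where T: "T \<subseteq> L" "finite T" "L \<subseteq> (\<Union>t\<in>T. ball t (e / 2))"
    using compactE_image[of L L "\<lambda>t. ball t (e / 2)"] \<open>e > 0\<close> by force
  have "eventually (\<lambda>k. A k \<subseteq> S \<and> A k \<inter> {} = {} \<and> (\<forall>U\<in>(\<lambda>t. ball t (e / 2)) ` T. A k \<inter> U \<noteq> {})) F"
    by (rule fell_limit_eventually[OF lim L]) (use T \<open>e > 0\<close> in auto)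
  thus ?thesis
  proof (rule eventually_mono, intro ballI)
    fix k y
    assume H: "A k \<subseteq> S \<and> A k \<inter> {} = {} \<and> (\<forall>U\<in>(\<lambda>t. ball t (e / 2)) ` T. A k \<inter> U \<noteq> {})"
      and "y \<in> L"
    then obtain t where t: "t \<in> T" "dist t y < e / 2" using T(3) by auto
    then obtain a where "a \<in> A k" "dist t a < e / 2" using H by fastforce
    thus "\<exists>a\<in>A k. dist a y < e"
      using t dist_triangle[of a y t] by (intro bexI[of _ a]) (auto simp: dist_commute)
  qed
qed

lemma fell_limit_eventually_near:
  fixes S :: "'a::metric_space set"
  assumes lim: "limitin (fell_topology (top_of_set S)) A L F"
    and L: "closedin (top_of_set S) L" and S: "compact S" and "e > 0"
  shows "eventually (\<lambda>k. \<forall>a\<in>A k. \<exists>y\<in>L. dist a y < e) F"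
proof -
  define K where "K = S - (\<Union>y\<in>L. ball y e)"
  have "compact K" unfolding K_def Diff_eq
    using S by (intro compact_Int_closed) auto
  moreover have "L \<inter> K = {}" using \<open>e > 0\<close> by (auto simp: K_def)
  ultimately have "eventually (\<lambda>k. A k \<subseteq> S \<and> A k \<inter> K = {}) F"
    using fell_limit_eventually[OF lim L, of K "{}"] by (auto simp: K_def)
  thus ?thesis
    by (rule eventually_mono) (auto simp: K_def dist_commute)
qed

section \<open>Producing collapsing fingers\<close>

lemma cyclic_order4_cis2pi:
  assumes "a < u" "u < b" "b < v" "v < a + 1"
  shows "cyclic_order4 (cis2pi a) (cis2pi u) (cis2pi b) (cis2pi v)"
proof -
  have "2 * pi * v < 2 * pi * (a + 1)" using assms(4) by simp
  thus ?thesis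
    unfolding cyclic_order4_def cis2pi_def
    by (intro exI[of _ "2 * pi * a"] exI[of _ "2 * pi * u"] exI[of _ "2 * pi * b"]
        exI[of _ "2 * pi * v"]) (use assms in \<open>simp add: distrib_left\<close>)
qed

lemma has_collapsing_fingerI:
  fixes cs :: "nat \<Rightarrow> complex \<Rightarrow> real^3"
  assumes r: "strict_mono r"
    and ord: "\<And>n. a n \<le> u n \<and> u n \<le> b n \<and> b n \<le> v n \<and> v n \<le> a n + 1"
    and xy: "x \<in> riemann_sphere" "y \<in> riemann_sphere" "x \<noteq> y"
    and la: "(\<lambda>n. cs (r n) (cis2pi (a n))) \<longlonglongrightarrow> x"
    and lu: "(\<lambda>n. cs (r n) (cis2pi (u n))) \<longlonglongrightarrow> y"
    and lb: "(\<lambda>n. cs (r n) (cis2pi (b n))) \<longlonglongrightarrow> x"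
    and lv: "(\<lambda>n. cs (r n) (cis2pi (v n))) \<longlonglongrightarrow> y"
  shows "has_collapsing_finger cs"
proof -
  have la': "(\<lambda>n. cs (r n) (cis2pi (a n + 1))) \<longlonglongrightarrow> x" using la by simp
  have "eventually (\<lambda>n. a n < u n \<and> u n < b n \<and> b n < v n \<and> v n < a n + 1) sequentially"
    using tendsto_eventually_neq[OF la lu xy(3)] tendsto_eventually_neq[OF lu lb xy(3)[symmetric]]
      tendsto_eventually_neq[OF lb lv xy(3)] tendsto_eventually_neq[OF lv la' xy(3)[symmetric]]
  proof eventually_elim
    case (elim n)
    thus ?case using ord[of n] by (metis order_le_imp_less_or_eq)
  qed
  then obtain N where N: "\<And>n. n \<ge> N \<Longrightarrow> a n < u n \<and> u n < b n \<and> b n < v n \<and> v n < a n + 1"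
    unfolding eventually_sequentially by blast
  define r' where "r' n = r (n + N)" for n
  have mono: "strict_mono r'" using r by (simp add: strict_mono_def r'_def)
  have cyc: "cyclic_order4 (cis2pi (a (n + N))) (cis2pi (u (n + N))) (cis2pi (b (n + N)))
      (cis2pi (v (n + N)))" for n
    using N[of "n + N"] by (intro cyclic_order4_cis2pi) auto
  have lim: "(\<lambda>n. cs (r' n) (cis2pi (a (n + N)))) \<longlonglongrightarrow> x" "(\<lambda>n. cs (r' n) (cis2pi (u (n + N)))) \<longlonglongrightarrow> y"
    "(\<lambda>n. cs (r' n) (cis2pi (b (n + N)))) \<longlonglongrightarrow> x" "(\<lambda>n. cs (r' n) (cis2pi (v (n + N)))) \<longlonglongrightarrow> y"
    unfolding r'_def
    using LIMSEQ_ignore_initial_segment[OF la, of N] LIMSEQ_ignore_initial_segment[OF lu, of N]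
      LIMSEQ_ignore_initial_segment[OF lb, of N] LIMSEQ_ignore_initial_segment[OF lv, of N]
    by simp_all
  show ?thesis
    unfolding has_collapsing_finger_def
    by (rule exI[of _ r'], rule conjI[OF mono], rule exI[of _ "\<lambda>n. cis2pi (a (n + N))"],
        rule exI[of _ "\<lambda>n. cis2pi (u (n + N))"], rule exI[of _ "\<lambda>n. cis2pi (b (n + N))"],
        rule exI[of _ "\<lambda>n. cis2pi (v (n + N))"], rule exI[of _ x], rule exI[of _ y])
      (use xy cyc lim in simp)
qed


lemma has_collapsing_finger_compactI:
  fixes cs :: "nat \<Rightarrow> complex \<Rightarrow> real^3"
  assumes r: "strict_mono r"
    and ord: "\<And>n. a n \<le> u n \<and> u n \<le> b n \<and> b n \<le> v n \<and> v n \<le> a n + 1"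
    and Y: "compact Y" "Y \<subseteq> riemann_sphere" "x \<notin> Y" "\<And>n. j n \<in> Y"
    and x: "x \<in> riemann_sphere"
    and la: "(\<lambda>n. cs (r n) (cis2pi (a n))) \<longlonglongrightarrow> x"
    and lb: "(\<lambda>n. cs (r n) (cis2pi (b n))) \<longlonglongrightarrow> x"
    and lu: "(\<lambda>n. dist (cs (r n) (cis2pi (u n))) (j n)) \<longlonglongrightarrow> 0"
    and lv: "(\<lambda>n. dist (cs (r n) (cis2pi (v n))) (j n)) \<longlonglongrightarrow> 0"
  shows "has_collapsing_finger cs"
proof -
  obtain y q where y: "y \<in> Y" and q: "strict_mono q" and lj: "(j \<circ> q) \<longlonglongrightarrow> y"
    using seq_compactE[OF compact_imp_seq_compact[OF Y(1)], of j] Y(4) by blast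
  have close: "(\<lambda>n. f (q n)) \<longlonglongrightarrow> y" if "(\<lambda>n. dist (f n) (j n)) \<longlonglongrightarrow> 0" for f
  proof -
    have "(\<lambda>n. j (q n)) \<longlonglongrightarrow> y" using lj by (simp add: o_def)
    moreover have "(\<lambda>n. dist (f (q n)) (j (q n))) \<longlonglongrightarrow> 0"
      using LIMSEQ_subseq_LIMSEQ[OF that q] by (simp add: o_def)
    ultimately show ?thesis by (rule tendsto_dist_transform)
  qed
  show ?thesis
  proof (rule has_collapsing_fingerI[of "r \<circ> q" "a \<circ> q" "u \<circ> q" "b \<circ> q" "v \<circ> q" x y])
    show "strict_mono (r \<circ> q)" using r q by (rule strict_mono_o)
    show "(\<lambda>n. cs ((r \<circ> q) n) (cis2pi ((a \<circ> q) n))) \<longlonglongrightarrow> x"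
      using LIMSEQ_subseq_LIMSEQ[OF la q] by (simp add: o_def)
    show "(\<lambda>n. cs ((r \<circ> q) n) (cis2pi ((b \<circ> q) n))) \<longlonglongrightarrow> x"
      using LIMSEQ_subseq_LIMSEQ[OF lb q] by (simp add: o_def)
    show "(\<lambda>n. cs ((r \<circ> q) n) (cis2pi ((u \<circ> q) n))) \<longlonglongrightarrow> y"
      using close[OF lu] by (simp add: o_def)
    show "(\<lambda>n. cs ((r \<circ> q) n) (cis2pi ((v \<circ> q) n))) \<longlonglongrightarrow> y"
      using close[OF lv] by (simp add: o_def)
    show "x \<noteq> y" using y Y(3) by blast
    show "y \<in> riemann_sphere" using y Y(2) by blast
    show "x \<in> riemann_sphere" by (rule x)
    show "(a \<circ> q) n \<le> (u \<circ> q) n \<and> (u \<circ> q) n \<le> (b \<circ> q) n \<and> (b \<circ> q) n \<le> (v \<circ> q) n \<and>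
      (v \<circ> q) n \<le> (a \<circ> q) n + 1" for n
      using ord[of "q n"] by simp
  qed
qed

section \<open>Curves converging in the Fell topology\<close>

lemma simple_closed_curve_arc_avoiding:
  fixes c :: "complex \<Rightarrow> 'a::metric_space"
  assumes c: "continuous_on circle1 c" "inj_on c circle1" and z0: "z0 \<in> circle1" and "\<epsilon> > 0"
  obtains Y where "compact Y" "connected Y" "Y \<subseteq> c ` circle1" "c z0 \<notin> Y"
    "\<And>w. w \<in> circle1 \<Longrightarrow> \<epsilon> \<le> dist (c w) (c z0) \<Longrightarrow> c w \<in> Y"
proof -
  have z0nz: "z0 \<noteq> 0" using z0 by (auto simp: circle1_def)
  define f where "f t = c (z0 * cis2pi t)" for t
  have circ: "z0 * cis2pi t \<in> circle1" for t using z0 by (simp add: circle1_def norm_mult)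
  have contf: "continuous_on UNIV f" unfolding f_def
    by (rule continuous_on_compose2[OF c(1)]) (use circ in \<open>auto intro!: continuous_intros\<close>)
  obtain d where d: "d > 0" "\<And>t. dist t 0 < d \<Longrightarrow> dist (f t) (f 0) < \<epsilon>"
    using contf \<open>\<epsilon> > 0\<close> unfolding continuous_on_iff by blast
  define \<theta> where "\<theta> = min (d / 2) (1 / 2)"
  have \<theta>: "0 < \<theta>" "\<theta> \<le> 1 / 2" "\<theta> < d" using d by (auto simp: \<theta>_def)
  define Y where "Y = f ` {\<theta>..1 - \<theta>}"
  show thesis
  proof (rule that[of Y])
    have "continuous_on {\<theta>..1 - \<theta>} f" using contf continuous_on_subset by blast
    thus "compact Y" "connected Y" unfolding Y_def
      by (auto intro: compact_continuous_image connected_continuous_image)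
    show "Y \<subseteq> c ` circle1" unfolding Y_def f_def using circ by auto
    show "c z0 \<notin> Y"
    proof
      assume "c z0 \<in> Y"
      then obtain t where t: "\<theta> \<le> t" "t \<le> 1 - \<theta>" "c (z0 * cis2pi t) = c z0"
        by (auto simp: Y_def f_def)
      hence "cis2pi t = 1" using inj_onD[OF c(2) t(3) circ z0] z0nz by simp
      then obtain m :: int where "t = of_int m" by (auto simp: cis2pi_eq_1_iff elim: Ints_cases)
      moreover have "0 < t" "t < 1" using t \<theta> by linarith+
      ultimately show False by simp
    qed
    fix w assume w: "w \<in> circle1" "\<epsilon> \<le> dist (c w) (c z0)"
    have "w / z0 \<in> circle1" using w z0 by (simp add: circle1_def norm_divide)
    then obtain t where t: "0 \<le> t" "t < 1" "cis2pi t = w / z0"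
      using circle1_cis2pi_from[of "w / z0" 0] by auto
    hence fw: "f t = c w" using z0nz by (simp add: f_def)
    have "f 0 = c z0" by (simp add: f_def cis2pi_def)
    moreover have "cis2pi (t - 1) = cis2pi t" by (simp add: cis2pi_eq_iff)
    hence "f (t - 1) = f t" by (simp add: f_def)
    ultimately have "\<not> t < \<theta>" "\<not> 1 - \<theta> < t"
      using d(2)[of t] d(2)[of "t - 1"] w(2) fw t \<theta> by (auto simp: dist_real_def)
    thus "c w \<in> Y" unfolding Y_def using fw[symmetric] by (intro image_eqI) auto
  qed
qed

lemma two_arcs_near_common_point:
  fixes C c :: "complex \<Rightarrow> 'a::heine_borel"
  assumes contC: "continuous_on circle1 C"
    and Y: "connected Y" "\<And>w. w \<in> circle1 \<Longrightarrow> \<epsilon> / 4 \<le> dist (c w) x \<Longrightarrow> c w \<in> Y"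
    and \<eta>: "0 < \<eta>" "\<eta> \<le> \<epsilon> / 4"
    and dense: "\<And>y. y \<in> Y \<Longrightarrow> \<exists>z\<in>circle1. dist (C z) y < \<eta>"
    and near: "\<And>z. z \<in> circle1 \<Longrightarrow> \<exists>w\<in>circle1. dist (C z) (c w) < \<eta>"
    and ab: "a \<le> b" "b \<le> a + 1" and xa: "dist (C (cis2pi a)) x < \<epsilon> / 4"
    and s: "a \<le> s" "s \<le> b" "\<epsilon> \<le> dist (C (cis2pi s)) (C (cis2pi a))"
    and s': "b \<le> s'" "s' \<le> a + 1" "\<epsilon> \<le> dist (C (cis2pi s')) (C (cis2pi a))"
  obtains u v j where "a \<le> u" "u \<le> b" "b \<le> v" "v \<le> a + 1" "j \<in> Y"
    "dist (C (cis2pi u)) j \<le> \<eta>" "dist (C (cis2pi v)) j \<le> \<eta>"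
proof -
  define P where "P = (\<lambda>t. C (cis2pi t)) ` {a..b}"
  define Q where "Q = (\<lambda>t. C (cis2pi t)) ` {b..a + 1}"
  have cont: "continuous_on T (\<lambda>t. C (cis2pi t))" for T
    by (rule continuous_on_compose2[OF contC continuous_on_cis2pi]) auto
  have P: "compact P" "P \<noteq> {}" and Q: "compact Q" "Q \<noteq> {}"
    unfolding P_def Q_def using ab by (auto intro!: compact_continuous_image cont)
  have meet: "\<exists>y\<in>Y. infdist y R \<le> \<eta>"
    if "C (cis2pi t) \<in> R" "\<epsilon> \<le> dist (C (cis2pi t)) (C (cis2pi a))" for t R
  proof -
    obtain w where w: "w \<in> circle1" "dist (C (cis2pi t)) (c w) < \<eta>" using near[of "cis2pi t"] by auto
    have "\<epsilon> / 4 \<le> dist (c w) x"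
      using that(2) xa w(2) \<eta> dist_triangle[of "C (cis2pi t)" "C (cis2pi a)" x]
        dist_triangle[of "C (cis2pi t)" x "c w"] by (simp add: dist_commute)
    moreover have "infdist (c w) R \<le> \<eta>"
      using infdist_le[OF that(1), of "c w"] w(2) by (simp add: dist_commute)
    ultimately show ?thesis using Y(2) w(1) by blast
  qed
  obtain y1 where "y1 \<in> Y" "infdist y1 P \<le> \<eta>" using meet[of s P] s by (auto simp: P_def)
  moreover obtain y2 where "y2 \<in> Y" "infdist y2 Q \<le> \<eta>" using meet[of s' Q] s' by (auto simp: Q_def)
  moreover have "infdist y P \<le> \<eta> \<or> infdist y Q \<le> \<eta>" if y: "y \<in> Y" for y
  proof -
    obtain z where z: "z \<in> circle1" "dist (C z) y < \<eta>" using dense[OF y] by blast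
    obtain t where t: "a \<le> t" "t < a + 1" "cis2pi t = z" using circle1_cis2pi_from[OF z(1)] by blast
    have "C z \<in> P \<or> C z \<in> Q" using t unfolding P_def Q_def by (cases "t \<le> b") auto
    thus ?thesis using infdist_le[of "C z" P y] infdist_le[of "C z" Q y] z(2)
      by (auto simp: dist_commute)
  qed
  ultimately obtain j where j: "j \<in> Y" "infdist j P \<le> \<eta>" "infdist j Q \<le> \<eta>"
    using connected_infdist_le_both[OF Y(1)] by metis
  obtain p where "p \<in> P" "infdist j P = dist j p"
    using infdist_attains_inf[OF compact_imp_closed[OF P(1)] P(2)] by blast
  then obtain u where u: "a \<le> u" "u \<le> b" "dist (C (cis2pi u)) j \<le> \<eta>"
    using j(2) by (auto simp: P_def dist_commute)
  obtain q where "q \<in> Q" "infdist j Q = dist j q"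
    using infdist_attains_inf[OF compact_imp_closed[OF Q(1)] Q(2)] by blast
  then obtain v where v: "b \<le> v" "v \<le> a + 1" "dist (C (cis2pi v)) j \<le> \<eta>"
    using j(3) by (auto simp: Q_def dist_commute)
  show thesis using that u v j(1) by blast
qed

definition small_arcs :: "(complex \<Rightarrow> 'a::metric_space) \<Rightarrow> real \<Rightarrow> real \<Rightarrow> bool" where
  "small_arcs C \<epsilon> \<delta> \<longleftrightarrow> (\<forall>a b. a \<le> b \<and> b \<le> a + 1 \<and> dist (C (cis2pi a)) (C (cis2pi b)) < \<delta> \<longrightarrow>
     (\<forall>s\<in>{a..b}. dist (C (cis2pi s)) (C (cis2pi a)) < \<epsilon>) \<or>
     (\<forall>s\<in>{b..a + 1}. dist (C (cis2pi s)) (C (cis2pi a)) < \<epsilon>))"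

locale fell_convergent_curves =
  fixes cs :: "nat \<Rightarrow> complex \<Rightarrow> real^3" and c :: "complex \<Rightarrow> real^3"
  assumes curves: "\<And>k. simple_closed_curve (cs k)"
    and curve: "simple_closed_curve c"
    and fell: "limitin (fell_topology (top_of_set riemann_sphere))
           (\<lambda>k. cs k ` circle1) (c ` circle1) sequentially"
begin

abbreviation J :: "(real^3) set" where "J \<equiv> c ` circle1"

lemma continuous_on_c: "continuous_on circle1 c"
  and inj_on_c: "inj_on c circle1"
  and c_in_sphere: "z \<in> circle1 \<Longrightarrow> c z \<in> riemann_sphere"
  using curve by (auto simp: simple_closed_curve_def)

lemma continuous_on_cs: "continuous_on circle1 (cs k)"
  and cs_in_sphere: "z \<in> circle1 \<Longrightarrow> cs k z \<in> riemann_sphere"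
  using curves[of k] by (auto simp: simple_closed_curve_def)

lemma compact_J: "compact J"
  by (intro compact_continuous_image continuous_on_c) (simp add: circle1_def)

lemma closedin_J: "closedin (top_of_set riemann_sphere) J"
  using compact_J c_in_sphere by (auto intro: closed_subset compact_imp_closed)

lemma compact_riemann_sphere: "compact riemann_sphere"
  by (simp add: riemann_sphere_def)

lemma limit_point_in_J:
  assumes "strict_mono r" "\<And>n. p n \<in> circle1" "(\<lambda>n. cs (r n) (p n)) \<longlonglongrightarrow> x"
  shows "x \<in> J"
  using fell_limit_contains_limit_points[OF fell closedin_J compact_riemann_sphere assms(1) _ assms(3)]
    assms(2) by blast

lemma eventually_dense_in_J:
  "e > 0 \<Longrightarrow> eventually (\<lambda>k. \<forall>y\<in>J. \<exists>z\<in>circle1. dist (cs k z) y < e) sequentially"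
  using fell_limit_eventually_dense[OF fell closedin_J compact_riemann_sphere] by simp

lemma eventually_near_J:
  "e > 0 \<Longrightarrow> eventually (\<lambda>k. \<forall>z\<in>circle1. \<exists>w\<in>circle1. dist (cs k z) (c w) < e) sequentially"
  using fell_limit_eventually_near[OF fell closedin_J compact_riemann_sphere] by simp

lemma eventually_escaping_arcs_near_common_point:
  assumes k: "strict_mono k" and "\<epsilon> > 0"
    and ab: "\<And>n. a n \<le> b n \<and> b n \<le> a n + 1"
    and s: "\<And>n. a n \<le> s n \<and> s n \<le> b n \<and> \<epsilon> \<le> dist (cs (k n) (cis2pi (s n))) (cs (k n) (cis2pi (a n)))"
    and s': "\<And>n. b n \<le> s' n \<and> s' n \<le> a n + 1 \<and>
      \<epsilon> \<le> dist (cs (k n) (cis2pi (s' n))) (cs (k n) (cis2pi (a n)))"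
    and la: "(\<lambda>n. cs (k n) (cis2pi (a n))) \<longlonglongrightarrow> x"
    and Y: "connected Y" "Y \<subseteq> J" "\<And>w. w \<in> circle1 \<Longrightarrow> \<epsilon> / 4 \<le> dist (c w) x \<Longrightarrow> c w \<in> Y"
    and \<eta>: "0 < \<eta>" "\<eta> \<le> \<epsilon> / 4"
  shows "eventually (\<lambda>n. \<exists>u v j. a n \<le> u \<and> u \<le> b n \<and> b n \<le> v \<and> v \<le> a n + 1 \<and> j \<in> Y \<and>
    dist (cs (k n) (cis2pi u)) j \<le> \<eta> \<and> dist (cs (k n) (cis2pi v)) j \<le> \<eta>) sequentially"
proof -
  have "eventually (\<lambda>n. dist (cs (k n) (cis2pi (a n))) x < \<epsilon> / 4) sequentially"
    using la \<open>\<epsilon> > 0\<close> unfolding tendsto_iff by (meson divide_pos_pos zero_less_numeral)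
  moreover have "eventually (\<lambda>n. \<forall>y\<in>J. \<exists>z\<in>circle1. dist (cs (k n) z) y < \<eta>) sequentially"
    using eventually_compose_filterlim[OF eventually_dense_in_J[OF \<eta>(1)] filterlim_subseq[OF k]] .
  moreover have "eventually (\<lambda>n. \<forall>z\<in>circle1. \<exists>w\<in>circle1. dist (cs (k n) z) (c w) < \<eta>) sequentially"
    using eventually_compose_filterlim[OF eventually_near_J[OF \<eta>(1)] filterlim_subseq[OF k]] .
  ultimately show ?thesis
  proof eventually_elim
    case (elim n)
    have dense: "\<exists>z\<in>circle1. dist (cs (k n) z) y < \<eta>" if "y \<in> Y" for y
      using elim(2) Y(2) that by blast
    have near: "\<exists>w\<in>circle1. dist (cs (k n) z) (c w) < \<eta>" if "z \<in> circle1" for z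
      using elim(3) that by blast
    obtain u v j where "a n \<le> u" "u \<le> b n" "b n \<le> v" "v \<le> a n + 1" "j \<in> Y"
        "dist (cs (k n) (cis2pi u)) j \<le> \<eta>" "dist (cs (k n) (cis2pi v)) j \<le> \<eta>"
      using two_arcs_near_common_point[OF continuous_on_cs Y(1) Y(3) \<eta> dense near _ _ elim(1),
          of "b n" "s n" "s' n"] ab[of n] s[of n] s'[of n] by auto
    thus ?case by blast
  qed
qed

text \<open>Both arcs escape far from x, so both come close to a common point of the arc Y of J that
  avoids x; these points give the second pair of finger points.\<close>

lemma has_collapsing_finger_of_escaping_arcs_converging:
  assumes k: "strict_mono k" and "\<epsilon> > 0"
    and ab: "\<And>n. a n \<le> b n \<and> b n \<le> a n + 1"
    and s: "\<And>n. a n \<le> s n \<and> s n \<le> b n \<and> \<epsilon> \<le> dist (cs (k n) (cis2pi (s n))) (cs (k n) (cis2pi (a n)))"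
    and s': "\<And>n. b n \<le> s' n \<and> s' n \<le> a n + 1 \<and>
      \<epsilon> \<le> dist (cs (k n) (cis2pi (s' n))) (cs (k n) (cis2pi (a n)))"
    and close: "(\<lambda>n. dist (cs (k n) (cis2pi (a n))) (cs (k n) (cis2pi (b n)))) \<longlonglongrightarrow> 0"
    and la: "(\<lambda>n. cs (k n) (cis2pi (a n))) \<longlonglongrightarrow> x"
  shows "has_collapsing_finger cs"
proof -
  have lb: "(\<lambda>n. cs (k n) (cis2pi (b n))) \<longlonglongrightarrow> x"
    using tendsto_dist_transform[OF la] close by (simp add: dist_commute)
  have "x \<in> J" using limit_point_in_J[OF k _ la] by simp
  then obtain z0 where z0: "z0 \<in> circle1" "x = c z0" by auto
  obtain Y where Y: "compact Y" "connected Y" "Y \<subseteq> J" "x \<notin> Y"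
    "\<And>w. w \<in> circle1 \<Longrightarrow> \<epsilon> / 4 \<le> dist (c w) x \<Longrightarrow> c w \<in> Y"
    using simple_closed_curve_arc_avoiding[OF continuous_on_c inj_on_c z0(1), of "\<epsilon> / 4"] z0(2) \<open>\<epsilon> > 0\<close>
    by auto
  define near_Y where "near_Y m n \<longleftrightarrow> (\<exists>u v j. a n \<le> u \<and> u \<le> b n \<and> b n \<le> v \<and> v \<le> a n + 1 \<and>
      j \<in> Y \<and> dist (cs (k n) (cis2pi u)) j \<le> inverse (real (Suc m)) \<and>
      dist (cs (k n) (cis2pi v)) j \<le> inverse (real (Suc m)))" for m n
  have freq: "frequently (near_Y m) sequentially" for m
  proof -
    define \<eta> where "\<eta> = min (\<epsilon> / 4) (inverse (real (Suc m)))"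
    have \<eta>: "0 < \<eta>" "\<eta> \<le> \<epsilon> / 4" "\<eta> \<le> inverse (real (Suc m))"
      using \<open>\<epsilon> > 0\<close> by (auto simp: \<eta>_def)
    have "eventually (\<lambda>n. \<exists>u v j. a n \<le> u \<and> u \<le> b n \<and> b n \<le> v \<and> v \<le> a n + 1 \<and> j \<in> Y \<and>
      dist (cs (k n) (cis2pi u)) j \<le> \<eta> \<and> dist (cs (k n) (cis2pi v)) j \<le> \<eta>) sequentially"
      by (rule eventually_escaping_arcs_near_common_point[OF k \<open>\<epsilon> > 0\<close> ab s s' la Y(2,3,5) \<eta>(1,2)])
    thus ?thesis unfolding near_Y_def
      by (rule eventually_frequently[OF sequentially_bot eventually_mono]) (use \<eta>(3) in force)
  qed
  obtain r where r: "strict_mono r" and "\<And>m. near_Y m (r m)"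
    using subseq_frequently[of near_Y, OF freq] by blast
  then obtain u v j where uvj: "\<And>m. a (r m) \<le> u m \<and> u m \<le> b (r m) \<and> b (r m) \<le> v m \<and> v m \<le> a (r m) + 1 \<and>
      j m \<in> Y \<and> dist (cs (k (r m)) (cis2pi (u m))) (j m) \<le> inverse (real (Suc m)) \<and>
      dist (cs (k (r m)) (cis2pi (v m))) (j m) \<le> inverse (real (Suc m))"
    unfolding near_Y_def by metis
  have dist_to_j: "(\<lambda>m. dist (cs (k (r m)) (cis2pi (w m))) (j m)) \<longlonglongrightarrow> 0"
    if "\<And>m. dist (cs (k (r m)) (cis2pi (w m))) (j m) \<le> inverse (real (Suc m))" for w
    by (rule Lim_null_comparison[OF _ LIMSEQ_inverse_real_of_nat]) (use that in simp)
  show ?thesis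
  proof (rule has_collapsing_finger_compactI[of "k \<circ> r" "a \<circ> r" u "b \<circ> r" v Y x j])
    show "strict_mono (k \<circ> r)" using k r by (rule strict_mono_o)
    show "(\<lambda>n. cs ((k \<circ> r) n) (cis2pi ((a \<circ> r) n))) \<longlonglongrightarrow> x"
      using LIMSEQ_subseq_LIMSEQ[OF la r] by (simp add: o_def)
    show "(\<lambda>n. cs ((k \<circ> r) n) (cis2pi ((b \<circ> r) n))) \<longlonglongrightarrow> x"
      using LIMSEQ_subseq_LIMSEQ[OF lb r] by (simp add: o_def)
    show "(\<lambda>n. dist (cs ((k \<circ> r) n) (cis2pi (u n))) (j n)) \<longlonglongrightarrow> 0"
      using dist_to_j[of u] uvj by simp
    show "(\<lambda>n. dist (cs ((k \<circ> r) n) (cis2pi (v n))) (j n)) \<longlonglongrightarrow> 0"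
      using dist_to_j[of v] uvj by simp
    show "x \<in> riemann_sphere" using \<open>x \<in> J\<close> c_in_sphere by blast
    show "Y \<subseteq> riemann_sphere" using Y(3) c_in_sphere by blast
  qed (use uvj Y in simp_all)
qed

lemma has_collapsing_finger_of_escaping_arcs:
  assumes k: "strict_mono k" and "\<epsilon> > 0"
    and ab: "\<And>n. a n \<le> b n \<and> b n \<le> a n + 1"
    and s: "\<And>n. a n \<le> s n \<and> s n \<le> b n \<and> \<epsilon> \<le> dist (cs (k n) (cis2pi (s n))) (cs (k n) (cis2pi (a n)))"
    and s': "\<And>n. b n \<le> s' n \<and> s' n \<le> a n + 1 \<and>
      \<epsilon> \<le> dist (cs (k n) (cis2pi (s' n))) (cs (k n) (cis2pi (a n)))"
    and close: "(\<lambda>n. dist (cs (k n) (cis2pi (a n))) (cs (k n) (cis2pi (b n)))) \<longlonglongrightarrow> 0"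
  shows "has_collapsing_finger cs"
proof -
  obtain x q where q: "strict_mono q" and "((\<lambda>n. cs (k n) (cis2pi (a n))) \<circ> q) \<longlonglongrightarrow> x"
    using compact_imp_seq_compact[OF compact_riemann_sphere, unfolded seq_compact_def,
        rule_format, of "\<lambda>n. cs (k n) (cis2pi (a n))"] cs_in_sphere by auto
  hence "(\<lambda>n. cs ((k \<circ> q) n) (cis2pi ((a \<circ> q) n))) \<longlonglongrightarrow> x" by (simp add: o_def)
  moreover have "(\<lambda>n. dist (cs ((k \<circ> q) n) (cis2pi ((a \<circ> q) n))) (cs ((k \<circ> q) n) (cis2pi ((b \<circ> q) n)))) \<longlonglongrightarrow> 0"
    using LIMSEQ_subseq_LIMSEQ[OF close q] by (simp add: o_def)
  ultimately show ?thesis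
    using has_collapsing_finger_of_escaping_arcs_converging[OF strict_mono_o[OF k q] \<open>\<epsilon> > 0\<close>,
        of "a \<circ> q" "b \<circ> q" "s \<circ> q" "s' \<circ> q"] ab s s' by simp
qed

lemma eventually_small_arcs:
  assumes "\<not> has_collapsing_finger cs" and "\<epsilon> > 0"
  shows "\<exists>\<delta>>0. eventually (\<lambda>k. small_arcs (cs k) \<epsilon> \<delta>) sequentially"
proof (rule ccontr)
  define bad where "bad m k \<longleftrightarrow> \<not> small_arcs (cs k) \<epsilon> (inverse (real (Suc m)))" for m k
  assume "\<not> ?thesis"
  hence "frequently (bad m) sequentially" for m
    unfolding bad_def by (metis not_eventually of_nat_0_less_iff inverse_positive_iff_positive zero_less_Suc)
  then obtain k where k: "strict_mono k" and bad: "\<And>m. bad m (k m)"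
    using subseq_frequently[of bad] by blast
  have "\<exists>a b s s'. a \<le> b \<and> b \<le> a + 1 \<and>
      dist (cs (k m) (cis2pi a)) (cs (k m) (cis2pi b)) < inverse (real (Suc m)) \<and>
      a \<le> s \<and> s \<le> b \<and> \<epsilon> \<le> dist (cs (k m) (cis2pi s)) (cs (k m) (cis2pi a)) \<and>
      b \<le> s' \<and> s' \<le> a + 1 \<and> \<epsilon> \<le> dist (cs (k m) (cis2pi s')) (cs (k m) (cis2pi a))" for m
  proof -
    obtain a b where ab: "a \<le> b" "b \<le> a + 1"
        "dist (cs (k m) (cis2pi a)) (cs (k m) (cis2pi b)) < inverse (real (Suc m))"
      and "\<not> (\<forall>s\<in>{a..b}. dist (cs (k m) (cis2pi s)) (cs (k m) (cis2pi a)) < \<epsilon>)"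
        "\<not> (\<forall>s\<in>{b..a + 1}. dist (cs (k m) (cis2pi s)) (cs (k m) (cis2pi a)) < \<epsilon>)"
      using bad[of m] unfolding bad_def small_arcs_def by blast
    then obtain s s' where "s \<in> {a..b}" "\<epsilon> \<le> dist (cs (k m) (cis2pi s)) (cs (k m) (cis2pi a))"
      "s' \<in> {b..a + 1}" "\<epsilon> \<le> dist (cs (k m) (cis2pi s')) (cs (k m) (cis2pi a))"
      by (auto simp: not_less)
    thus ?thesis using ab by (intro exI[of _ a] exI[of _ b] exI[of _ s] exI[of _ s']) simp
  qed
  then obtain a b s s' where abs: "\<And>m. a m \<le> b m \<and> b m \<le> a m + 1 \<and>
      dist (cs (k m) (cis2pi (a m))) (cs (k m) (cis2pi (b m))) < inverse (real (Suc m)) \<and>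
      a m \<le> s m \<and> s m \<le> b m \<and> \<epsilon> \<le> dist (cs (k m) (cis2pi (s m))) (cs (k m) (cis2pi (a m))) \<and>
      b m \<le> s' m \<and> s' m \<le> a m + 1 \<and> \<epsilon> \<le> dist (cs (k m) (cis2pi (s' m))) (cs (k m) (cis2pi (a m)))"
    by metis
  have "(\<lambda>m. dist (cs (k m) (cis2pi (a m))) (cs (k m) (cis2pi (b m)))) \<longlonglongrightarrow> 0"
    by (rule Lim_null_comparison[OF _ LIMSEQ_inverse_real_of_nat]) (use abs in \<open>simp add: less_imp_le\<close>)
  hence "has_collapsing_finger cs"
    using has_collapsing_finger_of_escaping_arcs[OF k \<open>\<epsilon> > 0\<close>, of a b s s'] abs by blast
  thus False using assms(1) by blast
qed

lemma neighbourhood_retraction: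
  obtains V \<phi> where "open V" "J \<subseteq> V" "continuous_on V \<phi>" "\<phi> ` V \<subseteq> circle1"
    "\<And>z. z \<in> circle1 \<Longrightarrow> \<phi> (c z) = z"
proof -
  obtain c' where hc: "homeomorphism circle1 J c c'"
    using homeomorphism_compact[OF _ continuous_on_c refl inj_on_c] by (auto simp: circle1_def)
  have "closedin (top_of_set UNIV) J" using compact_J by (simp add: compact_imp_closed)
  moreover have "ANR circle1" unfolding circle1_def by (rule ANR_sphere)
  moreover have "c' \<in> J \<rightarrow> circle1" using homeomorphism_image2[OF hc] by blast
  ultimately obtain V \<phi> where V: "J \<subseteq> V" "openin (top_of_set UNIV) V" "continuous_on V \<phi>"
      "\<phi> \<in> V \<rightarrow> circle1" "\<And>x. x \<in> J \<Longrightarrow> \<phi> x = c' x"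
    using ANR_imp_absolute_neighbourhood_extensor[OF _ homeomorphism_cont2[OF hc]] by metis
  moreover have "\<phi> (c z) = z" if "z \<in> circle1" for z
    using V(5) homeomorphism_apply1[OF hc that] that by auto
  ultimately show thesis using that[of V \<phi>] by (auto simp: Pi_iff)
qed

end

section \<open>Lifts without double excursions\<close>

text \<open>F is a lift of degree d of the circle map g with g (cis2pi t) = cis2pi (F t). The excursion
  hypothesis says that whenever g takes the same value at u and at v, at most one of the two arcs
  between u and v reaches angular distance h from that value; the spread hypothesis says that
  the image of g is not contained in a quarter of the circle.\<close>

locale excursion_free_lift =
  fixes F :: "real \<Rightarrow> real" and h :: real and d :: int
  assumes continuous: "continuous_on UNIV F"
    and degree: "\<And>t. F (t + 1) = F t + d"
    and h: "0 < h" "h \<le> 1 / 8"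
    and no_excursion: "\<And>u t1 v t2. u \<le> t1 \<Longrightarrow> t1 \<le> v \<Longrightarrow> v \<le> t2 \<Longrightarrow> t2 \<le> u + 1 \<Longrightarrow>
      F v - F u \<in> \<int> \<Longrightarrow> F t1 - F u - h \<in> \<int> \<or> F t1 - F u + h \<in> \<int> \<Longrightarrow>
      F t2 - F u - h \<in> \<int> \<or> F t2 - F u + h \<in> \<int> \<Longrightarrow> False"
    and spread: "\<And>y. \<exists>t. F t < y \<or> y + 1 / 4 < F t"
begin

lemma intermediate_value: "a \<le> b \<Longrightarrow> min (F a) (F b) \<le> y \<Longrightarrow> y \<le> max (F a) (F b) \<Longrightarrow> \<exists>x. a \<le> x \<and> x \<le> b \<and> F x = y"
  using IVT_real_between[OF continuous_on_subset[OF continuous]] by (metis subset_UNIV)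

lemma excursion_free_lift_uminus: "excursion_free_lift (\<lambda>t. - F t) h (- d)"
proof
  show "continuous_on UNIV (\<lambda>t. - F t)" by (intro continuous_intros continuous)
  show "\<exists>t. - F t < y \<or> y + 1 / 4 < - F t" for y
  proof -
    obtain t where "F t < - y - 1 / 4 \<or> - y - 1 / 4 + 1 / 4 < F t" using spread by blast
    thus ?thesis by (intro exI[of _ t]) linarith
  qed
  show "False" if "u \<le> t1" "t1 \<le> v" "v \<le> t2" "t2 \<le> u + 1" "- F v - - F u \<in> \<int>"
    "- F t1 - - F u - h \<in> \<int> \<or> - F t1 - - F u + h \<in> \<int>"
    "- F t2 - - F u - h \<in> \<int> \<or> - F t2 - - F u + h \<in> \<int>" for u t1 v t2
  proof (rule no_excursion[OF that(1-4)])
    have minus: "- x \<in> \<int> \<Longrightarrow> x \<in> \<int>" for x :: real using Ints_minus by fastforce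
    show "F v - F u \<in> \<int>" using that(5) minus[of "F v - F u"] by simp
    show "F t1 - F u - h \<in> \<int> \<or> F t1 - F u + h \<in> \<int>"
      using that(6) minus[of "F t1 - F u - h"] minus[of "F t1 - F u + h"] by (auto simp: algebra_simps)
    show "F t2 - F u - h \<in> \<int> \<or> F t2 - F u + h \<in> \<int>"
      using that(7) minus[of "F t2 - F u - h"] minus[of "F t2 - F u + h"] by (auto simp: algebra_simps)
  qed
qed (use degree h in auto)

lemma degree_le_1: "d \<le> 1"
proof (rule ccontr)
  assume "\<not> d \<le> 1"
  hence F1: "F 1 \<ge> F 0 + 2" using degree[of 0] by simp
  obtain v where v: "0 \<le> v" "v \<le> 1" "F v = F 0 + 1" using intermediate_value[of 0 1 "F 0 + 1"] F1 by auto
  obtain t1 where t1: "0 \<le> t1" "t1 \<le> v" "F t1 = F 0 + h" using intermediate_value[of 0 v "F 0 + h"] v h by auto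
  obtain t2 where t2: "v \<le> t2" "t2 \<le> 1" "F t2 = F 0 + 1 + h" using intermediate_value[of v 1 "F 0 + 1 + h"] v h F1 by auto
  show False by (rule no_excursion[of 0 t1 v t2]) (use v t1 t2 in auto)
qed

lemma degree_nonzero: "d \<noteq> 0"
proof
  assume d: "d = 0"
  have periodic: "F (t + of_int n) = F t" for t n using translate_of_int[of F, OF degree] d by simp
  have c01: "continuous_on {0..1::real} F" using continuous continuous_on_subset by blast
  obtain a where a: "a \<in> {0..1}" "\<And>t. t \<in> {0..1} \<Longrightarrow> F a \<le> F t"
    using continuous_attains_inf[OF compact_Icc _ c01] by auto
  obtain b0 where b0: "b0 \<in> {0..1}" "\<And>t. t \<in> {0..1} \<Longrightarrow> F t \<le> F b0"
    using continuous_attains_sup[OF compact_Icc _ c01] by auto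
  have bounds: "F a \<le> F t \<and> F t \<le> F b0" for t
  proof -
    have "t - of_int \<lfloor>t\<rfloor> \<in> {0..1}" by simp linarith
    thus ?thesis using a(2) b0(2) periodic[of "t - of_int \<lfloor>t\<rfloor>" "\<lfloor>t\<rfloor>"] by simp
  qed
  show False
  proof (cases "F b0 - F a < 2 * h")
    case True
    obtain t where "F t < F a \<or> F a + 1 / 4 < F t" using spread by blast
    thus False using bounds[of t] True h by auto
  next
    case False
    define b where "b = b0 - of_int \<lfloor>b0 - a\<rfloor>"
    have "a \<le> b" "b \<le> a + 1" unfolding b_def by linarith+
    moreover have "F b = F b0" unfolding b_def using periodic[of b0 "- \<lfloor>b0 - a\<rfloor>"] by simp
    ultimately have b: "a \<le> b" "b \<le> a + 1" "F b = F b0" by auto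
    have Fa1: "F (a + 1) = F a" using degree[of a] d by simp
    obtain u where u: "a \<le> u" "u \<le> b" "F u = F a + h" using intermediate_value[of a b "F a + h"] b False h by auto
    obtain t1 where t1: "u \<le> t1" "t1 \<le> b" "F t1 = F a + 2 * h" using intermediate_value[of u b "F a + 2 * h"] u b False h by auto
    obtain v where v: "b \<le> v" "v \<le> a + 1" "F v = F a + h" using intermediate_value[of b "a + 1" "F a + h"] b False h Fa1 by auto
    show False by (rule no_excursion[of u t1 v "a + 1"]) (use u t1 v b Fa1 in auto)
  qed
qed

lemma almost_increasing_within_period:
  assumes "d = 1" "s \<le> t" "t \<le> s + 1"
  shows "F s - F t < 2 * h"
proof (rule ccontr)
  assume "\<not> F s - F t < 2 * h"
  hence big: "F t \<le> F s - 2 * h" by simp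
  have Fs1: "F (s + 1) = F s + 1" using degree[of s] assms(1) by simp
  obtain u where u: "s \<le> u" "u \<le> t" "F u = F s - h" using intermediate_value[of s t "F s - h"] assms big h by auto
  obtain t1 where t1: "u \<le> t1" "t1 \<le> t" "F t1 = F s - 2 * h" using intermediate_value[of u t "F s - 2 * h"] u big h by auto
  obtain v where v: "t \<le> v" "v \<le> s + 1" "F v = F s - h" using intermediate_value[of t "s + 1" "F s - h"] assms big h Fs1 by auto
  have "F (s + 1) - F u - h = 1" using Fs1 u by simp
  show False by (rule no_excursion[of u t1 v "s + 1"]) (use u t1 v Fs1 in auto)
qed

lemma almost_increasing:
  assumes "d = 1" "s \<le> t"
  shows "F s - F t < 2 * h"
proof -
  define n where "n = \<lfloor>t - s\<rfloor>"
  have n: "0 \<le> n" "s + of_int n \<le> t" "t \<le> s + of_int n + 1" unfolding n_def using assms by linarith+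
  have "F (s + of_int n) = F s + of_int n" using translate_of_int[of F, OF degree] assms(1) by simp
  moreover have "F (s + of_int n) - F t < 2 * h" by (rule almost_increasing_within_period[OF assms(1) n(2,3)])
  ultimately show ?thesis using n(1) by linarith
qed

lemma degree_cases:
  "d = 1 \<and> (\<forall>s t. s \<le> t \<longrightarrow> F s - F t < 2 * h) \<or> d = -1 \<and> (\<forall>s t. s \<le> t \<longrightarrow> F t - F s < 2 * h)"
proof -
  interpret neg: excursion_free_lift "\<lambda>t. - F t" h "- d" by (rule excursion_free_lift_uminus)
  have "d = 1 \<or> d = -1" using degree_le_1 neg.degree_le_1 degree_nonzero by linarith
  thus ?thesis using almost_increasing neg.almost_increasing by fastforce
qed

end

section \<open>Almost monotone lifts and circle homeomorphisms\<close>

lemma continuous_on_running_Sup: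
  fixes G :: "real \<Rightarrow> real"
  assumes cont: "continuous_on UNIV G" and bdd: "\<And>t. bdd_above (G ` {..t})"
  shows "continuous_on UNIV (\<lambda>t. Sup (G ` {..t}))"
proof -
  define M where "M t = Sup (G ` {..t})" for t
  have upper: "G x \<le> M t" if "x \<le> t" for x t
    unfolding M_def by (rule cSup_upper[OF _ bdd]) (use that in auto)
  have least: "M t \<le> y" if "\<And>x. x \<le> t \<Longrightarrow> G x \<le> y" for t y
    unfolding M_def by (rule cSup_least) (use that in auto)
  have mono: "M s \<le> M t" if "s \<le> t" for s t
    by (rule least) (use upper that in auto)
  have "continuous_on UNIV M"
    unfolding continuous_on_iff
  proof (intro ballI allI impI)
    fix t e :: real assume "e > 0"
    hence "e / 3 > 0" by simp
    then obtain d where "d > 0" and d': "\<forall>x\<in>UNIV. dist x t < d \<longrightarrow> dist (G x) (G t) < e / 3"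
      using cont[unfolded continuous_on_iff] by blast
    hence d: "d > 0" "\<And>x. dist x t < d \<Longrightarrow> \<bar>G x - G t\<bar> < e / 3"
      by (auto simp: dist_real_def)
    have near: "M t' \<le> M t + e / 3" if "dist t' t < d" for t'
    proof (rule least)
      fix x assume "x \<le> t'"
      show "G x \<le> M t + e / 3"
      proof (cases "x \<le> t")
        case True thus ?thesis using upper[of x t] \<open>e > 0\<close> by simp
      next
        case False
        hence "dist x t < d" using \<open>x \<le> t'\<close> that by (simp add: dist_real_def)
        thus ?thesis using d(2)[of x] upper[of t t] unfolding abs_less_iff by linarith
      qed
    qed
    show "\<exists>d>0. \<forall>t'\<in>UNIV. dist t' t < d \<longrightarrow> dist (M t') (M t) < e"
    proof (intro exI[of _ d] conjI ballI impI)
      fix t' assume t': "dist t' t < d"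
      have "M t \<le> M t' + 2 * e / 3"
      proof (cases "t \<le> t'")
        case True thus ?thesis using mono[OF True] \<open>e > 0\<close> by simp
      next
        case False
        show ?thesis
        proof (rule least)
          fix x assume "x \<le> t"
          show "G x \<le> M t' + 2 * e / 3"
          proof (cases "x \<le> t'")
            case True thus ?thesis using upper[of x t'] \<open>e > 0\<close> by simp
          next
            case False
            hence "dist x t < d" using \<open>x \<le> t\<close> \<open>\<not> t \<le> t'\<close> t' by (simp add: dist_real_def)
            thus ?thesis using d(2)[of t'] d(2)[of x] upper[of t' t'] t' unfolding abs_less_iff by linarith
          qed
        qed
      qed
      thus "dist (M t') (M t) < e" using near[OF t'] \<open>e > 0\<close> by (simp add: dist_real_def)
    qed (use d(1) in simp)
  qed
  thus ?thesis by (simp add: M_def)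
qed

lemma degree_one_bounded_displacement:
  fixes M :: "real \<Rightarrow> real"
  assumes cont: "continuous_on UNIV M" and deg: "\<And>t. M (t + 1) = M t + 1"
  obtains B where "\<And>t. \<bar>t - M t\<bar> \<le> B"
proof -
  have "continuous_on {0..1} (\<lambda>t. \<bar>t - M t\<bar>)"
    by (intro continuous_intros continuous_on_subset[OF cont]) auto
  from continuous_attains_sup[OF compact_Icc _ this]
  obtain t0 where t0: "\<And>t. t \<in> {0..1} \<Longrightarrow> \<bar>t - M t\<bar> \<le> \<bar>t0 - M t0\<bar>" by fastforce
  have "\<bar>t - M t\<bar> \<le> \<bar>t0 - M t0\<bar>" for t
  proof -
    have "t - of_int \<lfloor>t\<rfloor> \<in> {0..1}" by simp linarith
    moreover have "M t = M (t - of_int \<lfloor>t\<rfloor>) + of_int \<lfloor>t\<rfloor>"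
      using translate_of_int[of M, OF deg, of "t - of_int \<lfloor>t\<rfloor>" "\<lfloor>t\<rfloor>"] by simp
    ultimately show ?thesis using t0[of "t - of_int \<lfloor>t\<rfloor>"] by simp
  qed
  thus thesis by (rule that)
qed

lemma degree_one_strict_mono_inverse:
  fixes H :: "real \<Rightarrow> real"
  assumes cont: "continuous_on UNIV H" and mono: "strict_mono H" and deg: "\<And>t. H (t + 1) = H t + 1"
  obtains L where "continuous_on UNIV L" "\<And>t. L (H t) = t" "\<And>u. H (L u) = u"
    "\<And>u. L (u + 1) = L u + 1"
proof -
  have "\<exists>t. H t = u" for u
  proof -
    define n where "n = \<lceil>u - H 0\<rceil>"
    have "H (of_int n - 1) \<le> u" "u \<le> H (of_int n)"
      using translate_of_int[of H, OF deg, of 0 n] translate_of_int[of H, OF deg, of 0 "n - 1"]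
      unfolding n_def by simp_all linarith+
    thus ?thesis
      using IVT'[of H "of_int n - 1" u "of_int n"] continuous_on_subset[OF cont] by auto
  qed
  hence surj: "surj H" by (metis surjI)
  have inj: "inj H" using mono by (rule strict_mono_imp_inj_on)
  define L where "L = inv H"
  have LH: "L (H t) = t" for t unfolding L_def using inj by simp
  have HL: "H (L u) = u" for u unfolding L_def using surj by (simp add: surj_f_inv_f)
  have "L (u + 1) = L u + 1" for u
    using LH[of "L u + 1"] deg[of "L u"] HL[of u] by simp
  moreover have "continuous_on UNIV L"
  proof (rule continuous_at_imp_continuous_on, intro ballI)
    fix u :: real
    have "isCont L (H (L u))"
      by (rule isCont_inverse_function[where f = H and d = 1])
        (use LH cont[unfolded continuous_on_eq_continuous_at[OF open_UNIV]] in auto)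
    thus "isCont L u" using HL by simp
  qed
  ultimately show thesis using that LH HL by blast
qed

lemma almost_increasing_running_Sup:
  fixes G :: "real \<Rightarrow> real"
  assumes cont: "continuous_on UNIV G" and deg: "\<And>t. G (t + 1) = G t + 1"
    and backtrack: "\<And>s t. s \<le> t \<Longrightarrow> G s - G t < \<eta>"
  defines "M \<equiv> \<lambda>t. Sup (G ` {..t})"
  shows "continuous_on UNIV M" "mono M" "\<And>t. M (t + 1) = M t + 1"
    "\<And>t. G t \<le> M t" "\<And>t. M t \<le> G t + \<eta>"
proof -
  have bdd: "bdd_above (G ` {..t})" for t
    using backtrack[of _ t] by (auto intro!: bdd_aboveI[of _ "G t + \<eta>"] less_imp_le simp: algebra_simps)
  have upper: "G x \<le> M t" if "x \<le> t" for x t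
    unfolding M_def by (rule cSup_upper[OF _ bdd]) (use that in auto)
  have least: "M t \<le> y" if "\<And>x. x \<le> t \<Longrightarrow> G x \<le> y" for t y
    unfolding M_def by (rule cSup_least) (use that in auto)
  show "continuous_on UNIV M"
    unfolding M_def by (rule continuous_on_running_Sup[OF cont bdd])
  show "mono M"
    by (rule monoI, rule least) (use upper order_trans in blast)
  show "G t \<le> M t" "M t \<le> G t + \<eta>" for t
    using upper[of t t] least[of t "G t + \<eta>"] backtrack[of _ t] by (auto simp: less_imp_le algebra_simps)
  show "M (t + 1) = M t + 1" for t
  proof (rule antisym)
    show "M (t + 1) \<le> M t + 1"
    proof (rule least)
      fix x assume "x \<le> t + 1"
      hence "G (x - 1) \<le> M t" by (intro upper) simp
      thus "G x \<le> M t + 1" using deg[of "x - 1"] by simp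
    qed
    have "M t \<le> M (t + 1) - 1"
    proof (rule least)
      fix x assume "x \<le> t"
      hence "G (x + 1) \<le> M (t + 1)" by (intro upper) simp
      thus "G x \<le> M (t + 1) - 1" using deg[of x] by simp
    qed
    thus "M t + 1 \<le> M (t + 1)" by simp
  qed
qed

text \<open>Mixing a small multiple of the identity into the running maximum makes it strictly monotone
  without moving it by more than \<eta>.\<close>

lemma almost_increasing_approx_homeomorphism:
  fixes G :: "real \<Rightarrow> real"
  assumes cont: "continuous_on UNIV G" and deg: "\<And>t. G (t + 1) = G t + 1"
    and backtrack: "\<And>s t. s \<le> t \<Longrightarrow> G s - G t < \<eta>" and "\<eta> > 0"
  obtains L H where "continuous_on UNIV L" "continuous_on UNIV H" "\<And>u. L (H u) = u" "\<And>u. H (L u) = u"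
    "\<And>u. L (u + 1) = L u + 1" "\<And>u. H (u + 1) = H u + 1" "\<And>u. \<bar>G (L u) - u\<bar> < 2 * \<eta>"
proof -
  define M where "M t = Sup (G ` {..t})" for t
  have M_cont: "continuous_on UNIV M" and M_mono: "mono M" and M_deg: "\<And>t. M (t + 1) = M t + 1"
    and M_close: "\<And>t. G t \<le> M t" "\<And>t. M t \<le> G t + \<eta>"
    using almost_increasing_running_Sup[OF cont deg backtrack] unfolding M_def by auto
  obtain B where B: "\<And>t. \<bar>t - M t\<bar> \<le> B" using degree_one_bounded_displacement[OF M_cont M_deg] by blast
  have "B \<ge> 0" using B[of 0] by linarith
  define mix where "mix = min (1 / 2) (\<eta> / (2 * (B + 1)))"
  have mix: "0 < mix" "mix \<le> 1 / 2" "mix * B \<le> \<eta> / 2"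
  proof -
    show "0 < mix" using \<open>\<eta> > 0\<close> \<open>B \<ge> 0\<close> by (auto simp: mix_def)
    show "mix \<le> 1 / 2" unfolding mix_def by (rule min.cobounded1)
    have "mix * B \<le> \<eta> / (2 * (B + 1)) * (B + 1)"
      using \<open>B \<ge> 0\<close> \<open>0 < mix\<close> by (intro mult_mono) (auto simp: mix_def)
    also have "\<dots> = \<eta> / 2" using \<open>B \<ge> 0\<close> by (simp add: field_simps)
    finally show "mix * B \<le> \<eta> / 2" .
  qed
  define H where "H t = (1 - mix) * M t + mix * t" for t
  have H_cont: "continuous_on UNIV H" unfolding H_def by (intro continuous_intros M_cont)
  have "strict_mono H"
  proof (rule strict_monoI)
    fix s t :: real assume "s < t"
    have "(1 - mix) * M s \<le> (1 - mix) * M t" using monoD[OF M_mono, of s t] \<open>s < t\<close> mix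
      by (intro mult_left_mono) auto
    moreover have "mix * s < mix * t" using \<open>s < t\<close> mix by simp
    ultimately show "H s < H t" by (simp add: H_def)
  qed
  moreover have H_deg: "H (t + 1) = H t + 1" for t using M_deg[of t] by (simp add: H_def algebra_simps)
  ultimately obtain L where L: "continuous_on UNIV L" "\<And>t. L (H t) = t" "\<And>u. H (L u) = u"
    "\<And>u. L (u + 1) = L u + 1"
    using degree_one_strict_mono_inverse[OF H_cont] by blast
  have "\<bar>G (L u) - u\<bar> < 2 * \<eta>" for u
  proof -
    have "H (L u) - M (L u) = mix * (L u - M (L u))" by (simp add: H_def algebra_simps)
    hence "\<bar>u - M (L u)\<bar> = mix * \<bar>L u - M (L u)\<bar>" using L(3)[of u] mix by (simp add: abs_mult)
    also have "\<dots> \<le> mix * B" using B[of "L u"] mix by (intro mult_left_mono) auto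
    finally have "\<bar>u - M (L u)\<bar> \<le> \<eta> / 2" using mix by linarith
    thus ?thesis using M_close[of "L u"] \<open>\<eta> > 0\<close> by linarith
  qed
  thus thesis using that L(1) H_cont L(2,3,4) H_deg by blast
qed

lemma quotient_map_cis2pi: "quotient_map (top_of_set {0..1}) (top_of_set circle1) cis2pi"
proof (rule continuous_imp_quotient_map)
  show "continuous_map (top_of_set {0..1}) (top_of_set circle1) cis2pi"
    by (simp add: continuous_on_cis2pi)
  show "cis2pi ` topspace (top_of_set {0..1}) = topspace (top_of_set circle1)"
    using cis2pi_image[of 0] by simp
qed (simp_all add: compact_space_subtopology Hausdorff_space_subtopology)

lemma circle_map_of_lift:
  fixes A :: "real \<Rightarrow> real" and m :: int
  assumes cont: "continuous_on UNIV A" and deg: "\<And>u. A (u + 1) = A u + m"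
  obtains f where "continuous_on circle1 f" "\<And>u. f (cis2pi u) = cis2pi (A u)"
proof -
  define f where "f z = cis2pi (A (SOME t. cis2pi t = z))" for z
  have well_defined: "cis2pi (A t) = cis2pi (A t')" if "cis2pi t = cis2pi t'" for t t'
  proof -
    have "t - t' \<in> \<int>" using that by (simp add: cis2pi_eq_iff)
    then obtain n where "t = t' + of_int n" by (metis Ints_cases add.commute diff_add_cancel)
    hence "A t = A t' + of_int (n * m)" using translate_of_int[of A, OF deg, of t' n] by simp
    thus ?thesis by (simp add: cis2pi_eq_iff)
  qed
  have f: "f (cis2pi u) = cis2pi (A u)" for u
    unfolding f_def by (rule well_defined, rule someI[of _ u]) simp
  have "continuous_on {0..1} (cis2pi \<circ> A)"
    by (intro continuous_on_compose continuous_on_subset[OF cont] continuous_on_cis2pi) auto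
  hence "continuous_map (top_of_set {0..1}) euclidean (f \<circ> cis2pi)"
    by (simp add: o_def f)
  hence "continuous_map (top_of_set circle1) euclidean f"
    by (rule continuous_compose_quotient_map[OF quotient_map_cis2pi])
  thus thesis using that f by simp
qed

lemma circle_homeomorphism_of_lift:
  fixes L H :: "real \<Rightarrow> real" and sg :: int
  assumes "continuous_on UNIV L" "continuous_on UNIV H" "\<And>u. L (H u) = u" "\<And>u. H (L u) = u"
    "\<And>u. L (u + 1) = L u + 1" "\<And>u. H (u + 1) = H u + 1" and sg: "sg = 1 \<or> sg = -1"
  obtains \<sigma> \<tau> where "homeomorphism circle1 circle1 \<sigma> \<tau>" "\<And>u. \<sigma> (cis2pi u) = cis2pi (sg * L u)"
proof -
  have "continuous_on UNIV (\<lambda>u. sg * L u)" by (intro continuous_intros assms(1))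
  moreover have "sg * L (u + 1) = sg * L u + of_int sg" for u using assms(5)[of u] by (simp add: distrib_left)
  ultimately obtain \<sigma> where \<sigma>: "continuous_on circle1 \<sigma>" "\<And>u. \<sigma> (cis2pi u) = cis2pi (sg * L u)"
    using circle_map_of_lift by blast
  have "continuous_on UNIV (\<lambda>u::real. H (of_int sg * u))"
    by (rule continuous_on_compose2[OF assms(2)]) (auto intro: continuous_intros)
  moreover have "H (of_int sg * (u + 1)) = H (of_int sg * u) + of_int sg" for u :: real
    using sg
  proof
    assume "sg = -1"
    have "H ((- u - 1) + 1) = H (- u - 1) + 1" by (rule assms(6))
    moreover have "- u - 1 = -1 - u" by simp
    ultimately show ?thesis using \<open>sg = -1\<close> by (simp add: algebra_simps)
  qed (simp add: assms(6))
  ultimately obtain \<tau> where \<tau>: "continuous_on circle1 \<tau>" "\<And>u. \<tau> (cis2pi u) = cis2pi (H (of_int sg * u))"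
    using circle_map_of_lift by blast
  have sg2: "of_int sg * of_int sg = (1::real)" using sg by auto
  have "homeomorphism circle1 circle1 \<sigma> \<tau>"
  proof (rule homeomorphismI)
    show "\<sigma> ` circle1 \<subseteq> circle1"
      by (auto elim!: circle1_cis2pi simp: \<sigma>(2) simp del: cis2pi_in_circle1) simp
    show "\<tau> ` circle1 \<subseteq> circle1"
      by (auto elim!: circle1_cis2pi simp: \<tau>(2) simp del: cis2pi_in_circle1) simp
    show "\<tau> (\<sigma> z) = z" if z: "z \<in> circle1" for z
    proof -
      obtain u where "z = cis2pi u" using circle1_cis2pi[OF z] by metis
      thus ?thesis using \<sigma>(2) \<tau>(2) assms(4) sg2 by (simp add: mult.assoc[symmetric])
    qed
    show "\<sigma> (\<tau> z) = z" if z: "z \<in> circle1" for z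
    proof -
      obtain u where "z = cis2pi u" using circle1_cis2pi[OF z] by metis
      thus ?thesis using \<sigma>(2) \<tau>(2) assms(3) sg2 by (simp add: mult.assoc[symmetric])
    qed
  qed (use \<sigma>(1) \<tau>(1) in auto)
  thus thesis using that \<sigma>(2) by blast
qed

lemma circle_map_lift:
  assumes cont: "continuous_on circle1 g" and maps: "g ` circle1 \<subseteq> circle1"
  obtains F :: "real \<Rightarrow> real" and d :: int
  where "continuous_on UNIV F" "\<And>t. F (t + 1) = F t + of_int d"
    "\<And>t. g (cis2pi t) = cis2pi (F t)"
proof -
  define f where "f t = g (cis2pi t)" for t
  have contf: "continuous_on UNIV f" unfolding f_def
    by (rule continuous_on_compose2[OF cont continuous_on_cis2pi]) auto
  have norm_f: "norm (f t) = 1" for t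
    using maps cis2pi_in_circle1[of t] by (force simp: f_def circle1_def)
  hence "f t \<noteq> 0" for t by (metis norm_zero zero_neq_one)
  then obtain l where l: "continuous_on UNIV l" "\<And>t. f t = exp (l t)"
    using continuous_logarithm_on_simply_connected[OF contf convex_imp_simply_connected[OF convex_UNIV]
        locally_path_connected_UNIV] by auto
  define F where "F t = Im (l t) / (2 * pi)" for t
  have contF: "continuous_on UNIV F" unfolding F_def by (intro continuous_intros l(1)) auto
  have lift: "f t = cis2pi (F t)" for t
  proof -
    have "exp (Re (l t)) = 1" using norm_f[of t] l(2)[of t] by simp
    hence "f t = cis (Im (l t))" using l(2)[of t] by (simp add: exp_eq_polar)
    thus ?thesis by (simp add: F_def cis2pi_def)
  qed
  have "F (t + 1) - F t \<in> \<int>" for t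
    using lift[of "t + 1"] lift[of t] by (simp add: f_def cis2pi_eq_iff)
  then obtain d where "\<And>t. F (t + 1) = F t + of_int d"
    using integer_increment_constant[OF contF] by blast
  thus thesis using that contF lift by (simp add: f_def)
qed

lemma dist_cis2pi_shift:
  assumes "a - b - h \<in> \<int> \<or> a - b + h \<in> \<int>"
  shows "dist (cis2pi a) (cis2pi b) = norm (cis2pi h - 1)"
proof -
  have "cis2pi (a - b) = cis2pi h \<or> cis2pi (a - b) = cnj (cis2pi h)"
    using assms by (auto simp: cis2pi_eq_iff cis2pi_minus[symmetric])
  moreover have "norm (cnj (cis2pi h) - 1) = norm (cis2pi h - 1)"
    by (metis complex_cnj_diff complex_cnj_one complex_mod_cnj)
  ultimately show ?thesis by (auto simp: dist_norm norm_cis2pi_diff)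
qed

lemma dist_cis2pi_opposite_quarter:
  assumes "y \<le> x" "x \<le> y + 1 / 4"
  shows "1 \<le> dist (cis2pi x) (cis2pi (y + 5 / 8))"
proof -
  define \<delta> where "\<delta> = x - (y + 5 / 8)"
  have "pi * y \<le> pi * x" "pi * x \<le> pi * y + pi / 4"
    using mult_left_mono[OF assms(1), of pi] mult_left_mono[OF assms(2), of pi]
    by (simp_all add: algebra_simps)
  moreover have "2 * pi * \<delta> = 2 * (pi * x) - 2 * (pi * y) - 5 * pi / 4"
    by (simp add: \<delta>_def algebra_simps)
  ultimately have "- (pi / 2) \<le> 2 * pi * \<delta> + pi" "2 * pi * \<delta> + pi \<le> pi / 2"
    by linarith+
  hence "cos (2 * pi * \<delta>) \<le> 0" using cos_ge_zero[of "2 * pi * \<delta> + pi"] by simp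
  hence "1 \<le> \<bar>Re (cis2pi \<delta> - 1)\<bar>" by (simp add: cis2pi_def)
  also have "\<dots> \<le> norm (cis2pi \<delta> - 1)" by (rule abs_Re_le_cmod)
  finally show ?thesis by (simp add: dist_norm norm_cis2pi_diff \<delta>_def)
qed

lemma circle_map_almost_monotone_lift:
  assumes cont: "continuous_on circle1 g" and maps: "g ` circle1 \<subseteq> circle1"
    and h: "0 < h" "h \<le> 1 / 8"
    and no_excursion: "\<And>u t1 v t2. u \<le> t1 \<Longrightarrow> t1 \<le> v \<Longrightarrow> v \<le> t2 \<Longrightarrow> t2 \<le> u + 1 \<Longrightarrow>
      g (cis2pi v) = g (cis2pi u) \<Longrightarrow> dist (g (cis2pi t1)) (g (cis2pi u)) = norm (cis2pi h - 1) \<Longrightarrow>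
      dist (g (cis2pi t2)) (g (cis2pi u)) = norm (cis2pi h - 1) \<Longrightarrow> False"
    and almost_onto: "\<And>z. z \<in> circle1 \<Longrightarrow> \<exists>w\<in>circle1. dist (g w) z < 1 / 2"
  obtains sg :: int and G where "sg = 1 \<or> sg = -1" "continuous_on UNIV G"
    "\<And>t. G (t + 1) = G t + 1" "\<And>s t. s \<le> t \<Longrightarrow> G s - G t < 2 * h"
    "\<And>t. g (cis2pi (of_int sg * t)) = cis2pi (G t)"
proof -
  obtain F and d :: int where F: "continuous_on UNIV F" "\<And>t. F (t + 1) = F t + of_int d"
      "\<And>t. g (cis2pi t) = cis2pi (F t)"
    using circle_map_lift[OF cont maps] by blast
  interpret excursion_free_lift F h d
  proof
    show "False" if "u \<le> t1" "t1 \<le> v" "v \<le> t2" "t2 \<le> u + 1" "F v - F u \<in> \<int>"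
      "F t1 - F u - h \<in> \<int> \<or> F t1 - F u + h \<in> \<int>" "F t2 - F u - h \<in> \<int> \<or> F t2 - F u + h \<in> \<int>"
      for u t1 v t2
      by (rule no_excursion[OF that(1-4)])
        (use that(5-7) dist_cis2pi_shift in \<open>simp_all add: F(3) cis2pi_eq_iff\<close>)
    show "\<exists>t. F t < y \<or> y + 1 / 4 < F t" for y
    proof -
      obtain w where w: "w \<in> circle1" "dist (g w) (cis2pi (y + 5 / 8)) < 1 / 2"
        using almost_onto[of "cis2pi (y + 5 / 8)"] by auto
      then obtain t where "w = cis2pi t" by (metis circle1_cis2pi)
      hence "\<not> (y \<le> F t \<and> F t \<le> y + 1 / 4)"
        using w(2) dist_cis2pi_opposite_quarter[of y "F t"] F(3) by auto
      thus ?thesis by (intro exI[of _ t]) linarith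
    qed
  qed (use F h in auto)
  show thesis
  proof (cases "d = 1")
    case True
    thus thesis using that[of 1 F] F degree_cases by auto
  next
    case False
    hence "d = -1" "\<And>s t. s \<le> t \<Longrightarrow> F t - F s < 2 * h" using degree_cases by auto
    moreover have "continuous_on UNIV (\<lambda>t. F (- t))"
      by (rule continuous_on_compose2[OF F(1)]) (auto intro: continuous_intros)
    moreover have "F (- (t + 1)) = F (- t) + 1" if "d = -1" for t
      using F(2)[of "- t - 1"] that by simp
    ultimately show thesis using that[of "-1" "\<lambda>t. F (- t)"] F(3) by simp
  qed
qed

lemma almost_monotone_lift_approx_homeomorphism:
  fixes G :: "real \<Rightarrow> real" and sg :: int
  assumes sg: "sg = 1 \<or> sg = -1" and G: "continuous_on UNIV G" "\<And>t. G (t + 1) = G t + 1"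
    "\<And>s t. s \<le> t \<Longrightarrow> G s - G t < \<eta>" "\<eta> > 0"
    and lift: "\<And>t. g (cis2pi (of_int sg * t)) = cis2pi (G t)"
  obtains \<sigma> \<tau> where "homeomorphism circle1 circle1 \<sigma> \<tau>"
    "\<And>z. z \<in> circle1 \<Longrightarrow> dist (g (\<sigma> z)) z < 4 * pi * \<eta>"
proof -
  obtain L H where LH: "continuous_on UNIV L" "continuous_on UNIV H" "\<And>u. L (H u) = u" "\<And>u. H (L u) = u"
    "\<And>u. L (u + 1) = L u + 1" "\<And>u. H (u + 1) = H u + 1" "\<And>u. \<bar>G (L u) - u\<bar> < 2 * \<eta>"
    using almost_increasing_approx_homeomorphism[OF G] by blast
  obtain \<sigma> \<tau> where hom: "homeomorphism circle1 circle1 \<sigma> \<tau>" and \<sigma>: "\<And>u. \<sigma> (cis2pi u) = cis2pi (sg * L u)"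
    using circle_homeomorphism_of_lift[OF LH(1-6) sg] by blast
  have "dist (g (\<sigma> z)) z < 4 * pi * \<eta>" if z: "z \<in> circle1" for z
  proof -
    obtain u where u: "z = cis2pi u" using circle1_cis2pi[OF z] by metis
    have "dist (g (\<sigma> z)) z = dist (cis2pi (G (L u))) (cis2pi u)" using u \<sigma> lift by simp
    also have "\<dots> \<le> 2 * pi * \<bar>G (L u) - u\<bar>" by (rule dist_cis2pi_le)
    also have "\<dots> < 2 * pi * (2 * \<eta>)" using LH(7)[of u] by simp
    finally show ?thesis by simp
  qed
  thus thesis using that hom by blast
qed

section \<open>Reparametrisation through a retraction onto the limit curve\<close>

locale curves_with_retraction = fell_convergent_curves +
  fixes \<phi> :: "real^3 \<Rightarrow> complex" and r :: real
  assumes r_pos: "r > 0"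
    and continuous_on_retraction: "continuous_on {w. infdist w J \<le> r} \<phi>"
    and retraction_in_circle1: "\<And>w. infdist w J \<le> r \<Longrightarrow> \<phi> w \<in> circle1"
    and retraction_c: "\<And>z. z \<in> circle1 \<Longrightarrow> \<phi> (c z) = z"
begin

abbreviation W :: "(real^3) set" where "W \<equiv> {w. infdist w J \<le> r}"

lemma c_in_W: "z \<in> circle1 \<Longrightarrow> c z \<in> W"
  using r_pos by simp

lemma uniformly_continuous_on_retraction: "uniformly_continuous_on W \<phi>"
proof (rule compact_uniformly_continuous[OF continuous_on_retraction compact_infdist_le])
qed (use compact_J r_pos in \<open>auto simp: circle1_def\<close>)

lemma close_to_J_retraction:
  assumes "e > 0"
  obtains \<rho> where "\<rho> > 0" "\<And>w z. z \<in> circle1 \<Longrightarrow> dist w (c z) < \<rho> \<Longrightarrow> w \<in> W \<and> dist w (c (\<phi> w)) < e"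
proof -
  obtain \<rho>c where \<rho>c: "\<rho>c > 0" "\<And>x x'. x \<in> circle1 \<Longrightarrow> x' \<in> circle1 \<Longrightarrow> dist x' x < \<rho>c \<Longrightarrow>
      dist (c x') (c x) < e / 2"
    using compact_uniformly_continuous[OF continuous_on_c] \<open>e > 0\<close>
    unfolding uniformly_continuous_on_def by (metis circle1_def compact_sphere half_gt_zero)
  obtain \<rho>\<phi> where \<rho>\<phi>: "\<rho>\<phi> > 0" "\<And>x x'. x \<in> W \<Longrightarrow> x' \<in> W \<Longrightarrow> dist x' x < \<rho>\<phi> \<Longrightarrow>
      dist (\<phi> x') (\<phi> x) < \<rho>c"
    using uniformly_continuous_on_retraction \<rho>c(1) unfolding uniformly_continuous_on_def by metis
  define \<rho> where "\<rho> = min r (min \<rho>\<phi> (e / 2))"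
  have \<rho>: "\<rho> > 0" "\<rho> \<le> r" "\<rho> \<le> \<rho>\<phi>" "\<rho> \<le> e / 2" using r_pos \<rho>\<phi>(1) assms by (auto simp: \<rho>_def)
  show thesis
  proof (rule that[OF \<rho>(1)], intro conjI)
    fix w z assume z: "z \<in> circle1" and d: "dist w (c z) < \<rho>"
    show w: "w \<in> W" using infdist_le[of "c z" J w] z d \<rho>(2) by auto
    have "dist (\<phi> w) z < \<rho>c" using \<rho>\<phi>(2)[OF c_in_W[OF z] w] d \<rho>(3) retraction_c[OF z] by simp
    hence "dist (c (\<phi> w)) (c z) < e / 2" using \<rho>c(2)[OF z] retraction_in_circle1 w by blast
    thus "dist w (c (\<phi> w)) < e" using d \<rho>(4) dist_triangle2[of w "c (\<phi> w)" "c z"] by linarith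
  qed
qed

lemma retraction_no_excursion:
  assumes small: "small_arcs C \<rho> \<delta>"
    and close: "\<And>z. z \<in> circle1 \<Longrightarrow> C z \<in> W \<and> dist (C z) (c (\<phi> (C z))) < \<delta> / 2"
    and unif: "\<And>x x'. x \<in> W \<Longrightarrow> x' \<in> W \<Longrightarrow> dist x' x < \<rho> \<Longrightarrow> dist (\<phi> x') (\<phi> x) < \<kappa>"
    and order: "u \<le> t1" "t1 \<le> v" "v \<le> t2" "t2 \<le> u + 1"
    and "\<phi> (C (cis2pi v)) = \<phi> (C (cis2pi u))"
    and t1: "dist (\<phi> (C (cis2pi t1))) (\<phi> (C (cis2pi u))) = \<kappa>"
    and t2: "dist (\<phi> (C (cis2pi t2))) (\<phi> (C (cis2pi u))) = \<kappa>"
  shows False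
proof -
  let ?C = "\<lambda>t. C (cis2pi t)"
  have "dist (?C u) (?C v) \<le> dist (?C u) (c (\<phi> (?C u))) + dist (?C v) (c (\<phi> (?C v)))"
    using dist_triangle2[of "?C u" "?C v" "c (\<phi> (?C u))"] \<open>\<phi> (?C v) = \<phi> (?C u)\<close> by simp
  also have "\<dots> < \<delta>" using close[of "cis2pi u"] close[of "cis2pi v"] by simp
  finally have "(\<forall>s\<in>{u..v}. dist (?C s) (?C u) < \<rho>) \<or> (\<forall>s\<in>{v..u + 1}. dist (?C s) (?C u) < \<rho>)"
    using small order unfolding small_arcs_def by auto
  moreover have far: "\<not> dist (?C s) (?C u) < \<rho>" if "dist (\<phi> (?C s)) (\<phi> (?C u)) = \<kappa>" for s
    using unif[of "?C u" "?C s"] close that by auto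
  ultimately show False using far[OF t1] far[OF t2] order by auto
qed

lemma retraction_almost_onto:
  assumes unif: "\<And>x x'. x \<in> W \<Longrightarrow> x' \<in> W \<Longrightarrow> dist x' x < \<eta> \<Longrightarrow> dist (\<phi> x') (\<phi> x) < 1 / 2"
    and W: "\<And>w. w \<in> circle1 \<Longrightarrow> C w \<in> W"
    and dense: "\<forall>y\<in>J. \<exists>w\<in>circle1. dist (C w) y < \<eta>" and z: "z \<in> circle1"
  shows "\<exists>w\<in>circle1. dist (\<phi> (C w)) z < 1 / 2"
proof -
  obtain w where "w \<in> circle1" "dist (C w) (c z) < \<eta>" using dense z by blast
  thus ?thesis using unif[OF c_in_W[OF z] W] retraction_c[OF z] by auto
qed

lemma retraction_reparametrization:
  assumes h: "0 < h" "h \<le> 1 / 8"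
    and unif_\<kappa>: "\<And>x x'. x \<in> W \<Longrightarrow> x' \<in> W \<Longrightarrow> dist x' x < \<rho> \<Longrightarrow>
      dist (\<phi> x') (\<phi> x) < norm (cis2pi h - 1)"
    and unif_half: "\<And>x x'. x \<in> W \<Longrightarrow> x' \<in> W \<Longrightarrow> dist x' x < \<eta> \<Longrightarrow> dist (\<phi> x') (\<phi> x) < 1 / 2"
    and cont: "continuous_on circle1 C" and small: "small_arcs C \<rho> \<delta>"
    and close: "\<And>z. z \<in> circle1 \<Longrightarrow> C z \<in> W \<and> dist (C z) (c (\<phi> (C z))) < \<delta> / 2"
    and dense: "\<forall>y\<in>J. \<exists>w\<in>circle1. dist (C w) y < \<eta>"
  obtains \<sigma> \<tau> where "homeomorphism circle1 circle1 \<sigma> \<tau>"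
    "\<And>z. z \<in> circle1 \<Longrightarrow> dist (\<phi> (C (\<sigma> z))) z < 4 * pi * (2 * h)"
proof -
  define g where "g = \<phi> \<circ> C"
  have "continuous_on circle1 g" unfolding g_def
    by (rule continuous_on_compose[OF cont continuous_on_subset[OF continuous_on_retraction]])
      (use close in auto)
  moreover have "g ` circle1 \<subseteq> circle1" using close retraction_in_circle1 by (auto simp: g_def)
  ultimately obtain sg :: int and G where sg: "sg = 1 \<or> sg = -1" and G: "continuous_on UNIV G"
      "\<And>t. G (t + 1) = G t + 1" "\<And>s t. s \<le> t \<Longrightarrow> G s - G t < 2 * h"
      "\<And>t. g (cis2pi (of_int sg * t)) = cis2pi (G t)"
  proof (rule circle_map_almost_monotone_lift[OF _ _ h])
    show "False" if "u \<le> t1" "t1 \<le> v" "v \<le> t2" "t2 \<le> u + 1" "g (cis2pi v) = g (cis2pi u)"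
      "dist (g (cis2pi t1)) (g (cis2pi u)) = norm (cis2pi h - 1)"
      "dist (g (cis2pi t2)) (g (cis2pi u)) = norm (cis2pi h - 1)" for u t1 v t2
      by (rule retraction_no_excursion[OF small close unif_\<kappa> that(1-4)]) (use that(5-7) in \<open>simp_all add: g_def\<close>)
    show "\<exists>w\<in>circle1. dist (g w) z < 1 / 2" if "z \<in> circle1" for z
      using retraction_almost_onto[OF unif_half _ dense that] close by (auto simp: g_def)
  qed blast
  show thesis
    by (rule almost_monotone_lift_approx_homeomorphism[OF sg G(1-3) _ G(4)]) (use h that in \<open>auto simp: g_def\<close>)
qed

lemma eventually_reparametrization_close:
  assumes no_finger: "\<not> has_collapsing_finger cs" and "\<epsilon> > 0"
  shows "eventually (\<lambda>k. \<exists>\<sigma> \<tau>. homeomorphism circle1 circle1 \<sigma> \<tau> \<and>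
            (\<forall>z\<in>circle1. dist (cs k (\<sigma> z)) (c z) < \<epsilon>)) sequentially"
proof -
  obtain \<rho>c where \<rho>c: "\<rho>c > 0" "\<And>x x'. x \<in> circle1 \<Longrightarrow> x' \<in> circle1 \<Longrightarrow> dist x' x < \<rho>c \<Longrightarrow>
      dist (c x') (c x) < \<epsilon> / 2"
    using compact_uniformly_continuous[OF continuous_on_c] \<open>\<epsilon> > 0\<close>
    unfolding uniformly_continuous_on_def by (metis circle1_def compact_sphere half_gt_zero)
  define h where "h = min (1 / 8) (\<rho>c / (8 * pi))"
  have h: "0 < h" "h \<le> 1 / 8" using \<rho>c(1) by (auto simp: h_def)
  have "8 * pi * h \<le> 8 * pi * (\<rho>c / (8 * pi))" unfolding h_def by (intro mult_left_mono) auto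
  hence h8: "4 * pi * (2 * h) \<le> \<rho>c" by simp
  have "norm (cis2pi h - 1) > 0" using h by (auto simp: cis2pi_eq_1_iff elim!: Ints_cases)
  then obtain \<rho>\<kappa> where \<rho>\<kappa>: "\<rho>\<kappa> > 0" "\<And>x x'. x \<in> W \<Longrightarrow> x' \<in> W \<Longrightarrow> dist x' x < \<rho>\<kappa> \<Longrightarrow>
      dist (\<phi> x') (\<phi> x) < norm (cis2pi h - 1)"
    using uniformly_continuous_on_retraction unfolding uniformly_continuous_on_def by metis
  obtain \<eta> where \<eta>: "\<eta> > 0" "\<And>x x'. x \<in> W \<Longrightarrow> x' \<in> W \<Longrightarrow> dist x' x < \<eta> \<Longrightarrow>
      dist (\<phi> x') (\<phi> x) < 1 / 2"
    using uniformly_continuous_on_retraction unfolding uniformly_continuous_on_def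
    by (metis divide_pos_pos zero_less_one zero_less_numeral)
  obtain \<delta> where \<delta>: "\<delta> > 0" and ev_small: "eventually (\<lambda>k. small_arcs (cs k) \<rho>\<kappa> \<delta>) sequentially"
    using eventually_small_arcs[OF no_finger \<rho>\<kappa>(1)] by blast
  obtain \<rho> where \<rho>: "\<rho> > 0" "\<And>w z. z \<in> circle1 \<Longrightarrow> dist w (c z) < \<rho> \<Longrightarrow>
      w \<in> W \<and> dist w (c (\<phi> w)) < min (\<delta> / 2) (\<epsilon> / 2)"
    using close_to_J_retraction[of "min (\<delta> / 2) (\<epsilon> / 2)"] \<delta> \<open>\<epsilon> > 0\<close> by auto
  show ?thesis
    using ev_small eventually_near_J[OF \<rho>(1)] eventually_dense_in_J[OF \<eta>(1)]
  proof eventually_elim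
    case (elim k)
    have close: "cs k z \<in> W \<and> dist (cs k z) (c (\<phi> (cs k z))) < min (\<delta> / 2) (\<epsilon> / 2)" if "z \<in> circle1" for z
      using elim(2) that \<rho>(2) by blast
    obtain \<sigma> \<tau> where hom: "homeomorphism circle1 circle1 \<sigma> \<tau>"
        and \<sigma>: "\<And>z. z \<in> circle1 \<Longrightarrow> dist (\<phi> (cs k (\<sigma> z))) z < 4 * pi * (2 * h)"
      by (rule retraction_reparametrization[OF h \<rho>\<kappa>(2) \<eta>(2) continuous_on_cs elim(1) _ elim(3)])
        (use close in auto)
    have "dist (cs k (\<sigma> z)) (c z) < \<epsilon>" if z: "z \<in> circle1" for z
    proof -
      have \<sigma>z: "\<sigma> z \<in> circle1" using hom z by (metis homeomorphism_image1 image_eqI)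
      have "dist (c (\<phi> (cs k (\<sigma> z)))) (c z) < \<epsilon> / 2"
        using \<rho>c(2)[OF z _ less_le_trans[OF \<sigma>[OF z] h8]] close[OF \<sigma>z] retraction_in_circle1 by auto
      moreover have "dist (cs k (\<sigma> z)) (c (\<phi> (cs k (\<sigma> z)))) < \<epsilon> / 2" using close[OF \<sigma>z] by simp
      ultimately show ?thesis using dist_triangle[of "cs k (\<sigma> z)" "c z" "c (\<phi> (cs k (\<sigma> z)))"] by linarith
    qed
    thus ?case using hom by blast
  qed
qed

end

theorem theorem10p6:
  fixes cs :: "nat \<Rightarrow> complex \<Rightarrow> real^3" and c :: "complex \<Rightarrow> real^3"
  assumes "\<And>k. simple_closed_curve (cs k)"
    and "simple_closed_curve c"
    and "limitin (fell_topology (top_of_set riemann_sphere))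
           (\<lambda>k. cs k ` circle1) (c ` circle1) sequentially"
    and "\<not> has_collapsing_finger cs"
  shows "\<exists>\<sigma> \<tau> :: nat \<Rightarrow> complex \<Rightarrow> complex.
           (\<forall>k. homeomorphism circle1 circle1 (\<sigma> k) (\<tau> k)) \<and>
           uniform_limit circle1 (\<lambda>k. cs k \<circ> \<sigma> k) c sequentially"
proof -
  interpret fell_convergent_curves cs c using assms(1-3) by unfold_locales
  obtain V \<phi> where V: "open V" "J \<subseteq> V" "continuous_on V \<phi>" "\<phi> ` V \<subseteq> circle1"
      "\<And>z. z \<in> circle1 \<Longrightarrow> \<phi> (c z) = z"
    using neighbourhood_retraction by blast
  obtain r where r: "r > 0" "{w. infdist w J \<le> r} \<subseteq> V"
    using compact_infdist_le_subset_open[OF compact_J _ V(1,2)] by (auto simp: circle1_def)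
  interpret curves_with_retraction cs c \<phi> r
  proof
    show "continuous_on {w. infdist w J \<le> r} \<phi>" using V(3) r(2) by (rule continuous_on_subset)
    show "\<phi> w \<in> circle1" if "infdist w J \<le> r" for w using that r(2) V(4) by blast
  qed (use r V in auto)
  show ?thesis
    by (rule uniform_limit_of_reparametrizations, rule eventually_reparametrization_close[OF assms(4)])
qed

end
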